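(* The forgetful functor $U:\mathbf{balg}\to\mathsf{WSet}$, $A\mapsto(A,\|\cdot\|)$, has a left adjoint; it sends a weighted set $(X,w)$ to the canonical extension $F(X,w)^\sigma$ of the free bounded archimedean $\ell$-algebra $F(X,w)$ on $(X,w)$.
   Context: An $\ell$-algebra is a commutative unital $\mathbb{R}$-algebra with a lattice order compatible with addition, with products and nonnegative scalar multiples of nonnegative elements nonnegative. It is bounded if each $a\le n\cdot1$ for some $n\in\mathbb{N}$, archimedean if $n\cdot a\le b$ for all $n$ implies $a\le0$. $\mathbf{bal}$ is the category of bounded archimedean $\ell$-algebras and unital $\ell$-algebra homomorphisms; $\|a\|=\inf\{r\mid a\vee(-a)\le r\cdot1\}$. A basic algebra is an $A\in\mathbf{bal}$ that is Dedekind complete (every subset bounded above has a supremum) and whose boolean algebra of idempotents ($e\vee f=e+f-ef$, $e\wedge f=ef$, $\neg e=1-e$) is atomic; $\mathbf{balg}$ is the category of basic algebras and $\mathbf{bal}$-morphisms preserving all existing joins and meets. A canonical extension of $A\in\mathbf{bal}$ is a basic algebra $A^\sigma$ with a $\mathbf{bal}$-monomorphism $e:A\to A^\sigma$ such that every element of $A^\sigma$ is a join of meets of elements of $e[A]$, and for $S,T\subseteq A$ and $\varepsilon>0$, $\bigwedge e[S]+\varepsilon\le\bigvee e[T]$ implies $\bigwedge e[S']\le\bigvee e[T']$ for some finite $S'\subseteq S,T'\subseteq T$; it exists and is unique up to isomorphism. A weighted set is $(X,w)$ with $w:X\to[0,\infty)$; $\mathsf{WSet}$-morphisms $(X_1,w_1)\to(X_2,w_2)$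 are functions with $w_2(f(x))\le w_1(x)$. $F(X,w)$ denotes the value at $(X,w)$ of the left adjoint of the forgetful functor $\mathbf{bal}\to\mathsf{WSet}$. *)

theory Defs
  imports Main "HOL.Real"
begin

record 'a lalg =
  car :: "'a set"
  zr  :: 'a
  un  :: 'a
  ad  :: "'a \<Rightarrow> 'a \<Rightarrow> 'a"
  ng  :: "'a \<Rightarrow> 'a"
  ml  :: "'a \<Rightarrow> 'a \<Rightarrow> 'a"
  sm  :: "real \<Rightarrow> 'a \<Rightarrow> 'a"
  lq  :: "'a \<Rightarrow> 'a \<Rightarrow> bool"

definition is_ub :: "'a lalg \<Rightarrow> 'a set \<Rightarrow> 'a \<Rightarrow> bool" where
  "is_ub A S u \<longleftrightarrow> u \<in> car A \<and> (\<forall>s\<in>S. lq A s u)"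

definition is_lub :: "'a lalg \<Rightarrow> 'a set \<Rightarrow> 'a \<Rightarrow> bool" where
  "is_lub A S u \<longleftrightarrow> is_ub A S u \<and> (\<forall>v. is_ub A S v \<longrightarrow> lq A u v)"

definition is_lb :: "'a lalg \<Rightarrow> 'a set \<Rightarrow> 'a \<Rightarrow> bool" where
  "is_lb A S u \<longleftrightarrow> u \<in> car A \<and> (\<forall>s\<in>S. lq A u s)"

definition is_glb :: "'a lalg \<Rightarrow> 'a set \<Rightarrow> 'a \<Rightarrow> bool" where
  "is_glb A S u \<longleftrightarrow> is_lb A S u \<and> (\<forall>v. is_lb A S v \<longrightarrow> lq A v u)"

definition lsup :: "'a lalg \<Rightarrow> 'a \<Rightarrow> 'a \<Rightarrow> 'a" where
  "lsup A a b = (THE c. is_lub A {a, b} c)"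

definition linf :: "'a lalg \<Rightarrow> 'a \<Rightarrow> 'a \<Rightarrow> 'a" where
  "linf A a b = (THE c. is_glb A {a, b} c)"

definition l_algebra :: "'a lalg \<Rightarrow> bool" where
  "l_algebra A \<longleftrightarrow>
     \<comment> \<open>closure\<close>
     zr A \<in> car A \<and> un A \<in> car A \<and>
     (\<forall>a\<in>car A. \<forall>b\<in>car A. ad A a b \<in> car A \<and> ml A a b \<in> car A) \<and>
     (\<forall>a\<in>car A. ng A a \<in> car A) \<and>
     (\<forall>r. \<forall>a\<in>car A. sm A r a \<in> car A) \<and>
     \<comment> \<open>abelian group\<close>
     (\<forall>a\<in>car A. \<forall>b\<in>car A. \<forall>c\<in>car A. ad A (ad A a b) c = ad A a (ad A b c)) \<and>
     (\<forall>a\<in>car A. \<forall>b\<in>car A. ad A a b = ad A b a) \<and>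
     (\<forall>a\<in>car A. ad A a (zr A) = a) \<and>
     (\<forall>a\<in>car A. ad A a (ng A a) = zr A) \<and>
     \<comment> \<open>commutative unital ring\<close>
     (\<forall>a\<in>car A. \<forall>b\<in>car A. \<forall>c\<in>car A. ml A (ml A a b) c = ml A a (ml A b c)) \<and>
     (\<forall>a\<in>car A. \<forall>b\<in>car A. ml A a b = ml A b a) \<and>
     (\<forall>a\<in>car A. ml A a (un A) = a) \<and>
     (\<forall>a\<in>car A. \<forall>b\<in>car A. \<forall>c\<in>car A. ml A a (ad A b c) = ad A (ml A a b) (ml A a c)) \<and>
     \<comment> \<open>real algebra\<close>
     (\<forall>r. \<forall>a\<in>car A. \<forall>b\<in>car A. sm A r (ad A a b) = ad A (sm A r a) (sm A r b)) \<and>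
     (\<forall>r s. \<forall>a\<in>car A. sm A (r + s) a = ad A (sm A r a) (sm A s a)) \<and>
     (\<forall>r s. \<forall>a\<in>car A. sm A (r * s) a = sm A r (sm A s a)) \<and>
     (\<forall>a\<in>car A. sm A 1 a = a) \<and>
     (\<forall>r. \<forall>a\<in>car A. \<forall>b\<in>car A. sm A r (ml A a b) = ml A (sm A r a) b) \<and>
     \<comment> \<open>partial order which is a lattice\<close>
     (\<forall>a\<in>car A. lq A a a) \<and>
     (\<forall>a\<in>car A. \<forall>b\<in>car A. lq A a b \<and> lq A b a \<longrightarrow> a = b) \<and>
     (\<forall>a\<in>car A. \<forall>b\<in>car A. \<forall>c\<in>car A. lq A a b \<and> lq A b c \<longrightarrow> lq A a c) \<and>
     (\<forall>a\<in>car A. \<forall>b\<in>car A. (\<exists>c. is_lub A {a, b} c) \<and> (\<exists>c. is_glb A {a, b} c)) \<and>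
     \<comment> \<open>compatibility\<close>
     (\<forall>a\<in>car A. \<forall>b\<in>car A. \<forall>c\<in>car A. lq A a b \<longrightarrow> lq A (ad A a c) (ad A b c)) \<and>
     (\<forall>a\<in>car A. \<forall>b\<in>car A. lq A (zr A) a \<and> lq A (zr A) b \<longrightarrow> lq A (zr A) (ml A a b)) \<and>
     (\<forall>r. \<forall>a\<in>car A. 0 \<le> r \<and> lq A (zr A) a \<longrightarrow> lq A (zr A) (sm A r a))"

definition bounded_l :: "'a lalg \<Rightarrow> bool" where
  "bounded_l A \<longleftrightarrow> (\<forall>a\<in>car A. \<exists>n::nat. lq A a (sm A (real n) (un A)))"

definition archimedean_l :: "'a lalg \<Rightarrow> bool" where
  "archimedean_l A \<longleftrightarrow>
     (\<forall>a\<in>car A. \<forall>b\<in>car A. (\<forall>n::nat. lq A (sm A (real n) a) b) \<longrightarrow> lq A a (zr A))"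

definition bal :: "'a lalg \<Rightarrow> bool" where
  "bal A \<longleftrightarrow> l_algebra A \<and> bounded_l A \<and> archimedean_l A"

definition lnorm :: "'a lalg \<Rightarrow> 'a \<Rightarrow> real" where
  "lnorm A a = Inf {r. 0 \<le> r \<and> lq A (lsup A a (ng A a)) (sm A r (un A))}"

definition bal_hom :: "'a lalg \<Rightarrow> 'b lalg \<Rightarrow> ('a \<Rightarrow> 'b) \<Rightarrow> bool" where
  "bal_hom A B g \<longleftrightarrow>
     (\<forall>a\<in>car A. g a \<in> car B) \<and>
     g (un A) = un B \<and>
     (\<forall>a\<in>car A. \<forall>b\<in>car A. g (ad A a b) = ad B (g a) (g b)) \<and>
     (\<forall>a\<in>car A. \<forall>b\<in>car A. g (ml A a b) = ml B (g a) (g b)) \<and>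
     (\<forall>r. \<forall>a\<in>car A. g (sm A r a) = sm B r (g a)) \<and>
     (\<forall>a\<in>car A. \<forall>b\<in>car A. g (lsup A a b) = lsup B (g a) (g b)) \<and>
     (\<forall>a\<in>car A. \<forall>b\<in>car A. g (linf A a b) = linf B (g a) (g b))"

definition dedekind_complete :: "'a lalg \<Rightarrow> bool" where
  "dedekind_complete A \<longleftrightarrow>
     (\<forall>S. S \<subseteq> car A \<and> S \<noteq> {} \<and> (\<exists>u. is_ub A S u) \<longrightarrow> (\<exists>u. is_lub A S u))"

definition idems :: "'a lalg \<Rightarrow> 'a set" where
  "idems A = {e \<in> car A. ml A e e = e}"

text \<open>Order of the boolean algebra of idempotents: e \<le> f iff e f = e.\<close>
definition idem_atom :: "'a lalg \<Rightarrow> 'a \<Rightarrow> bool" where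
  "idem_atom A a \<longleftrightarrow> a \<in> idems A \<and> a \<noteq> zr A \<and>
     (\<forall>f\<in>idems A. ml A f a = f \<longrightarrow> f = zr A \<or> f = a)"

definition idems_atomic :: "'a lalg \<Rightarrow> bool" where
  "idems_atomic A \<longleftrightarrow>
     (\<forall>e\<in>idems A. e \<noteq> zr A \<longrightarrow> (\<exists>a. idem_atom A a \<and> ml A a e = a))"

definition basic :: "'a lalg \<Rightarrow> bool" where
  "basic A \<longleftrightarrow> bal A \<and> dedekind_complete A \<and> idems_atomic A"

definition balg_hom :: "'a lalg \<Rightarrow> 'b lalg \<Rightarrow> ('a \<Rightarrow> 'b) \<Rightarrow> bool" where
  "balg_hom A B g \<longleftrightarrow> bal_hom A B g \<and>
     (\<forall>S u. S \<subseteq> car A \<and> is_lub A S u \<longrightarrow> is_lub B (g ` S) (g u)) \<and>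
     (\<forall>S u. S \<subseteq> car A \<and> is_glb A S u \<longrightarrow> is_glb B (g ` S) (g u))"

definition canonical_extension :: "'a lalg \<Rightarrow> 'b lalg \<Rightarrow> ('a \<Rightarrow> 'b) \<Rightarrow> bool" where
  "canonical_extension A S e \<longleftrightarrow>
     basic S \<and> bal_hom A S e \<and> inj_on e (car A) \<and>
     \<comment> \<open>every element is a join of meets of elements of e[A]\<close>
     (\<forall>s\<in>car S. \<exists>\<T>. (\<forall>T\<in>\<T>. T \<subseteq> car A \<and> (\<exists>m. is_glb S (e ` T) m)) \<and>
                       is_lub S {m. \<exists>T\<in>\<T>. is_glb S (e ` T) m} s) \<and>
     \<comment> \<open>compactness\<close>
     (\<forall>P Q m j \<epsilon>. P \<subseteq> car A \<and> Q \<subseteq> car A \<and> (\<epsilon>::real) > 0 \<and>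
        is_glb S (e ` P) m \<and> is_lub S (e ` Q) j \<and> lq S (ad S m (sm S \<epsilon> (un S))) j \<longrightarrow>
        (\<exists>P' Q' m' j'. finite P' \<and> finite Q' \<and> P' \<subseteq> P \<and> Q' \<subseteq> Q \<and> P' \<noteq> {} \<and> Q' \<noteq> {} \<and>
           is_glb S (e ` P') m' \<and> is_lub S (e ` Q') j' \<and> lq S m' j'))"

definition wset :: "'x set \<Rightarrow> ('x \<Rightarrow> real) \<Rightarrow> bool" where
  "wset X w \<longleftrightarrow> (\<forall>x\<in>X. 0 \<le> w x)"

text \<open>A WSet-morphism (X,w) \<rightarrow> U(A) = (A, norm).\<close>
definition wmor :: "'x set \<Rightarrow> ('x \<Rightarrow> real) \<Rightarrow> 'a lalg \<Rightarrow> ('x \<Rightarrow> 'a) \<Rightarrow> bool" where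
  "wmor X w A f \<longleftrightarrow> (\<forall>x\<in>X. f x \<in> car A \<and> lnorm A (f x) \<le> w x)"

end

theory Submission
  imports Defs
begin

text \<open>A basic algebra \<open>A\<close> is the algebra of bounded real functions on its atoms: for an atom \<open>p\<close> the
  element \<open>p a\<close> is a real multiple \<open>\<chi>\<^sub>p(a) p\<close>, and the coordinates \<open>\<chi>\<^sub>p\<close> determine the order, every
  bounded family of coordinates is realised, and joins and meets are computed coordinatewise.
  A \<open>\<^bold>b\<^bold>a\<^bold>l\<close>-morphism \<open>h : F \<rightarrow> A\<close> is therefore given by the real characters \<open>\<chi>\<^sub>p \<circ> h\<close>. By the compactness
  of the canonical extension \<open>e : F \<rightarrow> F\<^sup>\<sigma>\<close>, every real character of \<open>F\<close> is the coordinate of \<open>e\<close> at an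
  atom of \<open>F\<^sup>\<sigma>\<close>; this sends atoms of \<open>A\<close> to atoms of \<open>F\<^sup>\<sigma>\<close>, and precomposing coordinates along it is a
  \<open>\<^bold>b\<^bold>a\<^bold>l\<^bold>g\<close>-morphism \<open>F\<^sup>\<sigma> \<rightarrow> A\<close> extending \<open>h\<close>. It is unique because every element of \<open>F\<^sup>\<sigma>\<close> is a join of
  meets of elements of \<open>e[F]\<close>. Together with the freeness of \<open>F(X, w)\<close> this is the adjunction; the weight
  condition holds because morphisms do not increase the norm.\<close>

section \<open>Lattice-ordered algebras\<close>

locale l_alg =
  fixes A :: "'a lalg"
  assumes l_algebra: "l_algebra A"
begin

abbreviation C where "C \<equiv> car A"
abbreviation z0 where "z0 \<equiv> zr A"
abbreviation u1 where "u1 \<equiv> un A"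
abbreviation l_add (infixl "\<oplus>" 65) where "a \<oplus> b \<equiv> ad A a b"
abbreviation neg where "neg a \<equiv> ng A a"
abbreviation l_diff (infixl "\<ominus>" 65) where "a \<ominus> b \<equiv> ad A a (ng A b)"
abbreviation l_mul (infixl "\<otimes>" 70) where "a \<otimes> b \<equiv> ml A a b"
abbreviation l_scale (infixr "\<cdot>" 75) where "r \<cdot> a \<equiv> sm A r a"
abbreviation l_le (infix "\<preceq>" 50) where "a \<preceq> b \<equiv> lq A a b"
abbreviation l_sup (infixl "\<squnion>" 60) where "a \<squnion> b \<equiv> lsup A a b"
abbreviation l_inf (infixl "\<sqinter>" 60) where "a \<sqinter> b \<equiv> linf A a b"

lemma
  shows zero_closed: "z0 \<in> C"
    and one_closed: "u1 \<in> C"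
    and add_mul_closed: "\<forall>a\<in>C. \<forall>b\<in>C. a \<oplus> b \<in> C \<and> a \<otimes> b \<in> C"
    and neg_closed [rule_format]: "\<forall>a\<in>C. neg a \<in> C"
    and sm_closed [rule_format]: "\<forall>r. \<forall>a\<in>C. r \<cdot> a \<in> C"
    and add_assoc [rule_format]: "\<forall>a\<in>C. \<forall>b\<in>C. \<forall>c\<in>C. (a \<oplus> b) \<oplus> c = a \<oplus> (b \<oplus> c)"
    and add_comm [rule_format]: "\<forall>a\<in>C. \<forall>b\<in>C. a \<oplus> b = b \<oplus> a"
    and add_0 [rule_format, simp]: "\<forall>a\<in>C. a \<oplus> z0 = a"
    and add_neg [rule_format, simp]: "\<forall>a\<in>C. a \<oplus> neg a = z0"
    and mul_assoc [rule_format]: "\<forall>a\<in>C. \<forall>b\<in>C. \<forall>c\<in>C. (a \<otimes> b) \<otimes> c = a \<otimes> (b \<otimes> c)"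
    and mul_comm [rule_format]: "\<forall>a\<in>C. \<forall>b\<in>C. a \<otimes> b = b \<otimes> a"
    and mul_1 [rule_format, simp]: "\<forall>a\<in>C. a \<otimes> u1 = a"
    and distr [rule_format]: "\<forall>a\<in>C. \<forall>b\<in>C. \<forall>c\<in>C. a \<otimes> (b \<oplus> c) = a \<otimes> b \<oplus> a \<otimes> c"
    and sm_add [rule_format]: "\<forall>r. \<forall>a\<in>C. \<forall>b\<in>C. r \<cdot> (a \<oplus> b) = r \<cdot> a \<oplus> r \<cdot> b"
    and sm_radd [rule_format]: "\<forall>r s. \<forall>a\<in>C. (r + s) \<cdot> a = r \<cdot> a \<oplus> s \<cdot> a"
    and sm_mul [rule_format]: "\<forall>r s. \<forall>a\<in>C. (r * s) \<cdot> a = r \<cdot> (s \<cdot> a)"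
    and sm_1 [rule_format, simp]: "\<forall>a\<in>C. 1 \<cdot> a = a"
    and sm_ml [rule_format]: "\<forall>r. \<forall>a\<in>C. \<forall>b\<in>C. r \<cdot> (a \<otimes> b) = (r \<cdot> a) \<otimes> b"
    and le_refl [rule_format, simp]: "\<forall>a\<in>C. a \<preceq> a"
    and le_antisym [rule_format, OF _ _ conjI]: "\<forall>a\<in>C. \<forall>b\<in>C. a \<preceq> b \<and> b \<preceq> a \<longrightarrow> a = b"
    and le_trans [rule_format, OF _ _ _ conjI]:
      "\<forall>a\<in>C. \<forall>b\<in>C. \<forall>c\<in>C. a \<preceq> b \<and> b \<preceq> c \<longrightarrow> a \<preceq> c"
    and lattice: "\<forall>a\<in>C. \<forall>b\<in>C. (\<exists>c. is_lub A {a, b} c) \<and> (\<exists>c. is_glb A {a, b} c)"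
    and add_mono [rule_format]: "\<forall>a\<in>C. \<forall>b\<in>C. \<forall>c\<in>C. a \<preceq> b \<longrightarrow> a \<oplus> c \<preceq> b \<oplus> c"
    and mul_pos [rule_format, OF _ _ conjI]:
      "\<forall>a\<in>C. \<forall>b\<in>C. z0 \<preceq> a \<and> z0 \<preceq> b \<longrightarrow> z0 \<preceq> a \<otimes> b"
    and sm_pos_ax: "\<forall>r. \<forall>a\<in>C. 0 \<le> r \<and> z0 \<preceq> a \<longrightarrow> z0 \<preceq> r \<cdot> a"
  by (insert l_algebra, unfold l_algebra_def, (elim conjE, assumption)+)

lemma add_closed: "a \<in> C \<Longrightarrow> b \<in> C \<Longrightarrow> a \<oplus> b \<in> C"
  and mul_closed: "a \<in> C \<Longrightarrow> b \<in> C \<Longrightarrow> a \<otimes> b \<in> C"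
  using add_mul_closed by blast+

lemmas closed [simp] = zero_closed one_closed add_closed mul_closed neg_closed sm_closed

lemma sm_pos: "a \<in> C \<Longrightarrow> 0 \<le> r \<Longrightarrow> z0 \<preceq> a \<Longrightarrow> z0 \<preceq> r \<cdot> a"
  using sm_pos_ax by blast

lemma add_lcomm: "a \<in> C \<Longrightarrow> b \<in> C \<Longrightarrow> c \<in> C \<Longrightarrow> a \<oplus> (b \<oplus> c) = b \<oplus> (a \<oplus> c)"
  by (metis add_assoc add_comm)
lemmas add_ac = add_assoc add_comm add_lcomm
lemma add_0l[simp]: "a \<in> C \<Longrightarrow> z0 \<oplus> a = a" using add_comm add_0 by (metis closed(1))
lemma add_negl[simp]: "a \<in> C \<Longrightarrow> neg a \<oplus> a = z0" using add_comm add_neg closed by metis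
lemma add_neg_cancel[simp]: "a \<in> C \<Longrightarrow> b \<in> C \<Longrightarrow> a \<oplus> (neg a \<oplus> b) = b"
  by (metis add_assoc add_0l add_neg closed(5))
lemma add_neg_cancel2[simp]: "a \<in> C \<Longrightarrow> b \<in> C \<Longrightarrow> neg a \<oplus> (a \<oplus> b) = b"
  by (metis add_assoc add_0l add_negl closed(5))
lemma add_lcancel: "a \<in> C \<Longrightarrow> b \<in> C \<Longrightarrow> c \<in> C \<Longrightarrow> a \<oplus> b = a \<oplus> c \<Longrightarrow> b = c"
  by (metis add_neg_cancel2)
lemma neg_unique: "a \<in> C \<Longrightarrow> b \<in> C \<Longrightarrow> a \<oplus> b = z0 \<Longrightarrow> neg a = b"
  by (metis add_lcancel add_neg closed(5))
lemma neg_neg[simp]: "a \<in> C \<Longrightarrow> neg (neg a) = a"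
  by (metis add_negl closed(5) neg_unique)
lemma neg_0[simp]: "neg z0 = z0" by (metis add_0 closed(1) neg_unique)
lemma neg_add: "a \<in> C \<Longrightarrow> b \<in> C \<Longrightarrow> neg (a \<oplus> b) = neg a \<oplus> neg b"
  by (rule neg_unique) (auto simp: add_ac)
lemma sub_eq0: "a \<in> C \<Longrightarrow> b \<in> C \<Longrightarrow> a \<ominus> b = z0 \<longleftrightarrow> a = b"
  by (metis add_neg closed(5) neg_neg neg_unique)

lemma mul_lcomm: "a \<in> C \<Longrightarrow> b \<in> C \<Longrightarrow> c \<in> C \<Longrightarrow> a \<otimes> (b \<otimes> c) = b \<otimes> (a \<otimes> c)"
  by (metis mul_assoc mul_comm)
lemma mul_1l[simp]: "a \<in> C \<Longrightarrow> u1 \<otimes> a = a" using mul_comm mul_1 by (metis closed(2))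
lemma distr2: "a \<in> C \<Longrightarrow> b \<in> C \<Longrightarrow> c \<in> C \<Longrightarrow> (b \<oplus> c) \<otimes> a = b \<otimes> a \<oplus> c \<otimes> a"
proof -
  assume h: "a \<in> C" "b \<in> C" "c \<in> C"
  have "(b \<oplus> c) \<otimes> a = a \<otimes> (b \<oplus> c)" using h by (intro mul_comm) simp_all
  also have "\<dots> = a \<otimes> b \<oplus> a \<otimes> c" using h by (rule distr)
  also have "a \<otimes> b = b \<otimes> a" using h by (intro mul_comm)
  also have "a \<otimes> c = c \<otimes> a" using h by (intro mul_comm)
  finally show ?thesis .
qed
lemma mul_0[simp]: "a \<in> C \<Longrightarrow> a \<otimes> z0 = z0"
proof -
  assume a: "a \<in> C"
  have "a \<otimes> z0 \<oplus> a \<otimes> z0 = a \<otimes> (z0 \<oplus> z0)" using a by (intro distr[symmetric]) simp_all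
  also have "\<dots> = a \<otimes> z0 \<oplus> z0" using a by simp
  finally have eq: "a \<otimes> z0 \<oplus> a \<otimes> z0 = a \<otimes> z0 \<oplus> z0" .
  show ?thesis by (rule add_lcancel[OF _ _ _ eq]) (simp_all add: a)
qed
lemma mul_0l[simp]: "a \<in> C \<Longrightarrow> z0 \<otimes> a = z0" using mul_comm[of z0 a] by simp
lemma mul_neg: "a \<in> C \<Longrightarrow> b \<in> C \<Longrightarrow> a \<otimes> neg b = neg (a \<otimes> b)"
proof -
  assume h: "a \<in> C" "b \<in> C"
  have "a \<otimes> b \<oplus> a \<otimes> neg b = a \<otimes> (b \<oplus> neg b)" using h by (intro distr[symmetric]) simp_all
  also have "\<dots> = z0" using h by simp
  finally have eq: "a \<otimes> b \<oplus> a \<otimes> neg b = z0" .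
  show ?thesis by (rule neg_unique[OF _ _ eq, symmetric]) (simp_all add: h)
qed
lemma mul_negl: "a \<in> C \<Longrightarrow> b \<in> C \<Longrightarrow> neg a \<otimes> b = neg (a \<otimes> b)"
  using mul_comm[of "neg a" b] mul_comm[of a b] mul_neg[of b a] by simp

lemma sm_0[simp]: "a \<in> C \<Longrightarrow> 0 \<cdot> a = z0"
proof -
  assume a: "a \<in> C"
  have "0 \<cdot> a \<oplus> 0 \<cdot> a = (0 + 0) \<cdot> a" using a by (intro sm_radd[symmetric])
  also have "\<dots> = 0 \<cdot> a \<oplus> z0" using a by simp
  finally have eq: "0 \<cdot> a \<oplus> 0 \<cdot> a = 0 \<cdot> a \<oplus> z0" .
  show ?thesis by (rule add_lcancel[OF _ _ _ eq]) (simp_all add: a)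
qed
lemma sm_z[simp]: "r \<cdot> z0 = z0"
proof -
  have "r \<cdot> z0 \<oplus> r \<cdot> z0 = r \<cdot> (z0 \<oplus> z0)" by (intro sm_add[symmetric]) simp_all
  also have "\<dots> = r \<cdot> z0 \<oplus> z0" by simp
  finally have eq: "r \<cdot> z0 \<oplus> r \<cdot> z0 = r \<cdot> z0 \<oplus> z0" .
  show ?thesis by (rule add_lcancel[OF _ _ _ eq]) simp_all
qed
lemma sm_neg: "a \<in> C \<Longrightarrow> r \<cdot> neg a = neg (r \<cdot> a)"
proof -
  assume h: "a \<in> C"
  have "r \<cdot> a \<oplus> r \<cdot> neg a = r \<cdot> (a \<oplus> neg a)" using h by (intro sm_add[symmetric]) simp_all
  also have "\<dots> = z0" using h by simp
  finally have eq: "r \<cdot> a \<oplus> r \<cdot> neg a = z0" .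
  show ?thesis by (rule neg_unique[OF _ _ eq, symmetric]) (simp_all add: h)
qed
lemma sm_negr: "a \<in> C \<Longrightarrow> (- r) \<cdot> a = neg (r \<cdot> a)"
proof -
  assume h: "a \<in> C"
  have "r \<cdot> a \<oplus> (- r) \<cdot> a = (r + - r) \<cdot> a" using h by (intro sm_radd[symmetric])
  also have "\<dots> = z0" using h by simp
  finally have eq: "r \<cdot> a \<oplus> (- r) \<cdot> a = z0" .
  show ?thesis by (rule neg_unique[OF _ _ eq, symmetric]) (simp_all add: h)
qed
lemma sm_ml2: "a \<in> C \<Longrightarrow> b \<in> C \<Longrightarrow> r \<cdot> (a \<otimes> b) = a \<otimes> (r \<cdot> b)"
  using mul_comm[of a b] mul_comm[of a "r \<cdot> b"] sm_ml[of b a r] by simp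
lemma sm_sub: "a \<in> C \<Longrightarrow> (r - s) \<cdot> a = r \<cdot> a \<ominus> s \<cdot> a"
  using sm_radd[of a r "- s"] sm_negr[of a s] by simp
lemma sm_inv: "a \<in> C \<Longrightarrow> r \<noteq> 0 \<Longrightarrow> (1/r) \<cdot> (r \<cdot> a) = a"
proof -
  assume "a \<in> C" "r \<noteq> 0"
  then have "(1/r) \<cdot> (r \<cdot> a) = ((1/r) * r) \<cdot> a" by (simp add: sm_mul[symmetric])
  also have "(1/r) * r = 1" using \<open>r \<noteq> 0\<close> by simp
  finally show ?thesis using \<open>a \<in> C\<close> by simp
qed
lemma add_cancel_r[simp]: "a \<in> C \<Longrightarrow> c \<in> C \<Longrightarrow> a \<oplus> c \<oplus> neg c = a"
  by (simp add: add_assoc)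
lemma add_cancel_r2[simp]: "a \<in> C \<Longrightarrow> c \<in> C \<Longrightarrow> a \<oplus> neg c \<oplus> c = a"
  by (simp add: add_assoc)
lemma add_le_iff: "a \<in> C \<Longrightarrow> b \<in> C \<Longrightarrow> c \<in> C \<Longrightarrow> a \<oplus> c \<preceq> b \<oplus> c \<longleftrightarrow> a \<preceq> b"
  using add_mono[of "a \<oplus> c" "b \<oplus> c" "neg c"] add_mono[of a b c] by auto
lemma add_le_iffl: "a \<in> C \<Longrightarrow> b \<in> C \<Longrightarrow> c \<in> C \<Longrightarrow> c \<oplus> a \<preceq> c \<oplus> b \<longleftrightarrow> a \<preceq> b"
  using add_le_iff[of a b c] add_comm[of c a] add_comm[of c b] by simp

lemma add_mono2: "a \<in> C \<Longrightarrow> b \<in> C \<Longrightarrow> c \<in> C \<Longrightarrow> d \<in> C \<Longrightarrow> a \<preceq> b \<Longrightarrow> c \<preceq> d \<Longrightarrow> a \<oplus> c \<preceq> b \<oplus> d"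
  by (meson add_mono add_le_iffl closed(3) le_trans)
lemma le_sub_iff: "a \<in> C \<Longrightarrow> c \<in> C \<Longrightarrow> d \<in> C \<Longrightarrow> a \<oplus> c \<preceq> d \<longleftrightarrow> a \<preceq> d \<ominus> c"
  using add_le_iff[of a "d \<ominus> c" c] by simp
lemma sub_le_iff: "a \<in> C \<Longrightarrow> c \<in> C \<Longrightarrow> d \<in> C \<Longrightarrow> d \<preceq> a \<oplus> c \<longleftrightarrow> d \<ominus> c \<preceq> a"
  using add_le_iff[of "d \<ominus> c" a c] by simp
lemma le_sub0: "a \<in> C \<Longrightarrow> b \<in> C \<Longrightarrow> a \<preceq> b \<longleftrightarrow> z0 \<preceq> b \<ominus> a"
  using le_sub_iff[of z0 a b] by simp
lemma neg_le: "a \<in> C \<Longrightarrow> b \<in> C \<Longrightarrow> neg b \<preceq> neg a \<longleftrightarrow> a \<preceq> b"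
proof -
  assume h: "a \<in> C" "b \<in> C"
  have "neg b \<preceq> neg a \<longleftrightarrow> neg b \<oplus> (a \<oplus> b) \<preceq> neg a \<oplus> (a \<oplus> b)"
    using h by (intro add_le_iff[symmetric]) simp_all
  also have "neg b \<oplus> (a \<oplus> b) = a" using h add_comm[of a b] by simp
  also have "neg a \<oplus> (a \<oplus> b) = b" using h by simp
  finally show ?thesis .
qed
lemma neg_le0: "a \<in> C \<Longrightarrow> neg a \<preceq> z0 \<longleftrightarrow> z0 \<preceq> a" using neg_le[of z0 a] by simp
lemma neg_ge0: "a \<in> C \<Longrightarrow> z0 \<preceq> neg a \<longleftrightarrow> a \<preceq> z0" using neg_le[of a z0] by simp
lemma pos_add: "a \<in> C \<Longrightarrow> b \<in> C \<Longrightarrow> z0 \<preceq> a \<Longrightarrow> z0 \<preceq> b \<Longrightarrow> z0 \<preceq> a \<oplus> b"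
  using add_mono2[of z0 a z0 b] by simp
lemma sub_distr_sm: "a \<in> C \<Longrightarrow> b \<in> C \<Longrightarrow> r \<cdot> (b \<ominus> a) = r \<cdot> b \<ominus> r \<cdot> a"
  by (simp add: sm_add sm_neg)
lemma sm_mono: "a \<in> C \<Longrightarrow> b \<in> C \<Longrightarrow> 0 \<le> r \<Longrightarrow> a \<preceq> b \<Longrightarrow> r \<cdot> a \<preceq> r \<cdot> b"
  using sm_pos[of "b \<ominus> a" r] le_sub0[of a b] le_sub0[of "r \<cdot> a" "r \<cdot> b"] sub_distr_sm[of a b r] by simp
lemma sm_mono_r: "a \<in> C \<Longrightarrow> r \<le> s \<Longrightarrow> z0 \<preceq> a \<Longrightarrow> r \<cdot> a \<preceq> s \<cdot> a"
  using sm_pos[of a "s - r"] le_sub0[of "r \<cdot> a" "s \<cdot> a"] sm_sub[of a s r] by simp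
lemma mul_mono: "a \<in> C \<Longrightarrow> b \<in> C \<Longrightarrow> c \<in> C \<Longrightarrow> z0 \<preceq> c \<Longrightarrow> a \<preceq> b \<Longrightarrow> c \<otimes> a \<preceq> c \<otimes> b"
proof -
  assume h: "a \<in> C" "b \<in> C" "c \<in> C" "z0 \<preceq> c" "a \<preceq> b"
  have "z0 \<preceq> c \<otimes> (b \<ominus> a)" using h le_sub0[of a b] by (intro mul_pos) simp_all
  also have "c \<otimes> (b \<ominus> a) = c \<otimes> b \<ominus> c \<otimes> a" using h by (simp add: distr mul_neg)
  finally show ?thesis using h le_sub0[of "c \<otimes> a" "c \<otimes> b"] by simp
qed

lemma sup_ex: "a \<in> C \<Longrightarrow> b \<in> C \<Longrightarrow> is_lub A {a, b} (a \<squnion> b)"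
proof -
  assume h: "a \<in> C" "b \<in> C"
  obtain c where c: "is_lub A {a, b} c" using lattice h by blast
  have "\<And>d. is_lub A {a, b} d \<Longrightarrow> d = c"
    using c unfolding is_lub_def is_ub_def by (meson le_antisym)
  then have "(THE c. is_lub A {a, b} c) = c" using c by (intro the_equality)
  then show ?thesis using c unfolding lsup_def by simp
qed
lemma inf_ex: "a \<in> C \<Longrightarrow> b \<in> C \<Longrightarrow> is_glb A {a, b} (a \<sqinter> b)"
proof -
  assume h: "a \<in> C" "b \<in> C"
  obtain c where c: "is_glb A {a, b} c" using lattice h by blast
  have "\<And>d. is_glb A {a, b} d \<Longrightarrow> d = c"
    using c unfolding is_glb_def is_lb_def by (meson le_antisym)
  then have "(THE c. is_glb A {a, b} c) = c" using c by (intro the_equality)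
  then show ?thesis using c unfolding linf_def by simp
qed
lemma sup_cl[simp]: "a \<in> C \<Longrightarrow> b \<in> C \<Longrightarrow> a \<squnion> b \<in> C"
  using sup_ex unfolding is_lub_def is_ub_def by blast
lemma inf_cl[simp]: "a \<in> C \<Longrightarrow> b \<in> C \<Longrightarrow> a \<sqinter> b \<in> C"
  using inf_ex unfolding is_glb_def is_lb_def by blast
lemma sup_ge1: "a \<in> C \<Longrightarrow> b \<in> C \<Longrightarrow> a \<preceq> a \<squnion> b"
  using sup_ex unfolding is_lub_def is_ub_def by blast
lemma sup_ge2: "a \<in> C \<Longrightarrow> b \<in> C \<Longrightarrow> b \<preceq> a \<squnion> b"
  using sup_ex unfolding is_lub_def is_ub_def by blast
lemma sup_least: "a \<in> C \<Longrightarrow> b \<in> C \<Longrightarrow> c \<in> C \<Longrightarrow> a \<preceq> c \<Longrightarrow> b \<preceq> c \<Longrightarrow> a \<squnion> b \<preceq> c"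
  using sup_ex[of a b] unfolding is_lub_def is_ub_def by blast
lemma inf_le1: "a \<in> C \<Longrightarrow> b \<in> C \<Longrightarrow> a \<sqinter> b \<preceq> a"
  using inf_ex unfolding is_glb_def is_lb_def by blast
lemma inf_le2: "a \<in> C \<Longrightarrow> b \<in> C \<Longrightarrow> a \<sqinter> b \<preceq> b"
  using inf_ex unfolding is_glb_def is_lb_def by blast
lemma inf_greatest: "a \<in> C \<Longrightarrow> b \<in> C \<Longrightarrow> c \<in> C \<Longrightarrow> c \<preceq> a \<Longrightarrow> c \<preceq> b \<Longrightarrow> c \<preceq> a \<sqinter> b"
  using inf_ex[of a b] unfolding is_glb_def is_lb_def by blast
lemma sup_le_iff: "a \<in> C \<Longrightarrow> b \<in> C \<Longrightarrow> c \<in> C \<Longrightarrow> a \<squnion> b \<preceq> c \<longleftrightarrow> a \<preceq> c \<and> b \<preceq> c"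
  by (meson sup_cl sup_ge1 sup_ge2 sup_least le_trans)
lemma sup_unique: "a \<in> C \<Longrightarrow> b \<in> C \<Longrightarrow> c \<in> C \<Longrightarrow> a \<preceq> c \<Longrightarrow> b \<preceq> c \<Longrightarrow>
    (\<And>d. d \<in> C \<Longrightarrow> a \<preceq> d \<Longrightarrow> b \<preceq> d \<Longrightarrow> c \<preceq> d) \<Longrightarrow> a \<squnion> b = c"
  by (meson le_antisym sup_cl sup_ge1 sup_ge2 sup_least)
lemma inf_unique: "a \<in> C \<Longrightarrow> b \<in> C \<Longrightarrow> c \<in> C \<Longrightarrow> c \<preceq> a \<Longrightarrow> c \<preceq> b \<Longrightarrow>
    (\<And>d. d \<in> C \<Longrightarrow> d \<preceq> a \<Longrightarrow> d \<preceq> b \<Longrightarrow> d \<preceq> c) \<Longrightarrow> a \<sqinter> b = c"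
  by (meson le_antisym inf_cl inf_le1 inf_le2 inf_greatest)
lemma sup_comm: "a \<in> C \<Longrightarrow> b \<in> C \<Longrightarrow> a \<squnion> b = b \<squnion> a"
  by (rule sup_unique) (simp_all add: sup_ge1 sup_ge2 sup_least)
lemma inf_comm: "a \<in> C \<Longrightarrow> b \<in> C \<Longrightarrow> a \<sqinter> b = b \<sqinter> a"
  by (rule inf_unique) (simp_all add: inf_le1 inf_le2 inf_greatest)
lemma sup_absorb: "a \<in> C \<Longrightarrow> b \<in> C \<Longrightarrow> a \<preceq> b \<Longrightarrow> a \<squnion> b = b"
  by (rule sup_unique) simp_all
lemma sup_absorb2: "a \<in> C \<Longrightarrow> b \<in> C \<Longrightarrow> b \<preceq> a \<Longrightarrow> a \<squnion> b = a"
  by (rule sup_unique) simp_all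
lemma inf_absorb: "a \<in> C \<Longrightarrow> b \<in> C \<Longrightarrow> a \<preceq> b \<Longrightarrow> a \<sqinter> b = a"
  by (rule inf_unique) simp_all
lemma inf_absorb2: "a \<in> C \<Longrightarrow> b \<in> C \<Longrightarrow> b \<preceq> a \<Longrightarrow> a \<sqinter> b = b"
  by (rule inf_unique) simp_all
lemma sup_idem[simp]: "a \<in> C \<Longrightarrow> a \<squnion> a = a" by (simp add: sup_absorb)
lemma inf_idem[simp]: "a \<in> C \<Longrightarrow> a \<sqinter> a = a" by (simp add: inf_absorb)
lemma le_iff_sup: "a \<in> C \<Longrightarrow> b \<in> C \<Longrightarrow> a \<preceq> b \<longleftrightarrow> a \<squnion> b = b"
  by (metis sup_absorb sup_ge1)
lemma sup_mono: "a \<in> C \<Longrightarrow> b \<in> C \<Longrightarrow> c \<in> C \<Longrightarrow> d \<in> C \<Longrightarrow> a \<preceq> c \<Longrightarrow> b \<preceq> d \<Longrightarrow> a \<squnion> b \<preceq> c \<squnion> d"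
  by (meson sup_cl sup_ge1 sup_ge2 sup_least le_trans)
lemma inf_mono: "a \<in> C \<Longrightarrow> b \<in> C \<Longrightarrow> c \<in> C \<Longrightarrow> d \<in> C \<Longrightarrow> a \<preceq> c \<Longrightarrow> b \<preceq> d \<Longrightarrow> a \<sqinter> b \<preceq> c \<sqinter> d"
  by (meson inf_cl inf_le1 inf_le2 inf_greatest le_trans)
lemma sup_assoc: "a \<in> C \<Longrightarrow> b \<in> C \<Longrightarrow> c \<in> C \<Longrightarrow> (a \<squnion> b) \<squnion> c = a \<squnion> (b \<squnion> c)"
proof (rule sup_unique)
  assume h: "a \<in> C" "b \<in> C" "c \<in> C"
  have 1: "a \<preceq> a \<squnion> (b \<squnion> c)" using h by (simp add: sup_ge1)
  have 2: "b \<squnion> c \<preceq> a \<squnion> (b \<squnion> c)" using h by (simp add: sup_ge2)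
  have 3: "b \<preceq> a \<squnion> (b \<squnion> c)" using h 2 le_trans[of b "b \<squnion> c" "a \<squnion> (b \<squnion> c)"] by (simp add: sup_ge1)
  show "a \<squnion> b \<preceq> a \<squnion> (b \<squnion> c)" using h 1 3 by (simp add: sup_least)
  show "c \<preceq> a \<squnion> (b \<squnion> c)" using h 2 le_trans[of c "b \<squnion> c" "a \<squnion> (b \<squnion> c)"] by (simp add: sup_ge2)
  fix d assume d: "d \<in> C" "a \<squnion> b \<preceq> d" "c \<preceq> d"
  then have "a \<preceq> d" "b \<preceq> d" using h sup_le_iff by auto
  then show "a \<squnion> (b \<squnion> c) \<preceq> d" using h d by (simp add: sup_least)
qed simp_all
lemma sup_add: "a \<in> C \<Longrightarrow> b \<in> C \<Longrightarrow> c \<in> C \<Longrightarrow> (a \<squnion> b) \<oplus> c = (a \<oplus> c) \<squnion> (b \<oplus> c)"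
proof (rule sym, rule sup_unique)
  fix d assume h: "a \<in> C" "b \<in> C" "c \<in> C" "d \<in> C" "a \<oplus> c \<preceq> d" "b \<oplus> c \<preceq> d"
  then have "a \<squnion> b \<preceq> d \<ominus> c" using le_sub_iff sup_least by simp
  then show "(a \<squnion> b) \<oplus> c \<preceq> d" using h le_sub_iff[of "a \<squnion> b" c d] by simp
qed (simp_all add: add_mono sup_ge1 sup_ge2)
lemma inf_add: "a \<in> C \<Longrightarrow> b \<in> C \<Longrightarrow> c \<in> C \<Longrightarrow> (a \<sqinter> b) \<oplus> c = (a \<oplus> c) \<sqinter> (b \<oplus> c)"
proof (rule sym, rule inf_unique)
  fix d assume h: "a \<in> C" "b \<in> C" "c \<in> C" "d \<in> C" "d \<preceq> a \<oplus> c" "d \<preceq> b \<oplus> c"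
  then have "d \<ominus> c \<preceq> a \<sqinter> b" using sub_le_iff inf_greatest by simp
  then show "d \<preceq> (a \<sqinter> b) \<oplus> c" using h sub_le_iff[of "a \<sqinter> b" c d] by simp
qed (simp_all add: add_mono inf_le1 inf_le2)
lemma add_sup: "a \<in> C \<Longrightarrow> b \<in> C \<Longrightarrow> c \<in> C \<Longrightarrow> c \<oplus> (a \<squnion> b) = (c \<oplus> a) \<squnion> (c \<oplus> b)"
  using sup_add[of a b c] add_comm by simp
lemma add_inf: "a \<in> C \<Longrightarrow> b \<in> C \<Longrightarrow> c \<in> C \<Longrightarrow> c \<oplus> (a \<sqinter> b) = (c \<oplus> a) \<sqinter> (c \<oplus> b)"
  using inf_add[of a b c] add_comm by simp
lemma neg_sup: "a \<in> C \<Longrightarrow> b \<in> C \<Longrightarrow> neg (a \<squnion> b) = neg a \<sqinter> neg b"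
proof (rule sym, rule inf_unique)
  fix d assume h: "a \<in> C" "b \<in> C" "d \<in> C" "d \<preceq> neg a" "d \<preceq> neg b"
  then have "a \<squnion> b \<preceq> neg d" using neg_le[of a "neg d"] neg_le[of b "neg d"] sup_least by simp
  then show "d \<preceq> neg (a \<squnion> b)" using h neg_le[of "a \<squnion> b" "neg d"] by simp
qed (simp_all add: neg_le sup_ge1 sup_ge2)
lemma neg_inf: "a \<in> C \<Longrightarrow> b \<in> C \<Longrightarrow> neg (a \<sqinter> b) = neg a \<squnion> neg b"
proof (rule sym, rule sup_unique)
  fix d assume h: "a \<in> C" "b \<in> C" "d \<in> C" "neg a \<preceq> d" "neg b \<preceq> d"
  then have "neg d \<preceq> a \<sqinter> b" using neg_le[of "neg d" a] neg_le[of "neg d" b] inf_greatest by simp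
  then show "neg (a \<sqinter> b) \<preceq> d" using h neg_le[of "neg d" "a \<sqinter> b"] by simp
qed (simp_all add: neg_le inf_le1 inf_le2)
lemma sup_inf_sum: "a \<in> C \<Longrightarrow> b \<in> C \<Longrightarrow> (a \<squnion> b) \<oplus> (a \<sqinter> b) = a \<oplus> b"
proof -
  assume h: "a \<in> C" "b \<in> C"
  have "(a \<oplus> b) \<oplus> neg (a \<squnion> b) = (a \<oplus> b) \<oplus> (neg a \<sqinter> neg b)" using h by (simp add: neg_sup)
  also have "\<dots> = (a \<oplus> b \<ominus> a) \<sqinter> (a \<oplus> b \<ominus> b)" using h by (simp add: add_inf)
  also have "a \<oplus> b \<ominus> a = b" using h add_comm[of a b] by simp
  also have "a \<oplus> b \<ominus> b = a" using h by simp
  finally have e: "(a \<oplus> b) \<oplus> neg (a \<squnion> b) = b \<sqinter> a" .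
  have "(a \<squnion> b) \<oplus> (a \<sqinter> b) = (a \<squnion> b) \<oplus> ((a \<oplus> b) \<oplus> neg (a \<squnion> b))"
    using e h inf_comm by simp
  also have "\<dots> = a \<oplus> b" using h add_comm[of "a \<oplus> b" "neg (a \<squnion> b)"] by simp
  finally show ?thesis .
qed
lemma inf_ge0: "a \<in> C \<Longrightarrow> b \<in> C \<Longrightarrow> z0 \<preceq> a \<Longrightarrow> z0 \<preceq> b \<Longrightarrow> z0 \<preceq> a \<sqinter> b"
  by (simp add: inf_greatest)
lemma le_add_pos: "a \<in> C \<Longrightarrow> b \<in> C \<Longrightarrow> z0 \<preceq> b \<Longrightarrow> a \<preceq> a \<oplus> b"
  using add_le_iffl[of z0 b a] by simp
lemma add_le_self: "a \<in> C \<Longrightarrow> b \<in> C \<Longrightarrow> a \<oplus> b \<preceq> b \<Longrightarrow> a \<preceq> z0"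
  using add_le_iff[of a z0 b] by simp

abbreviation pospart where "pospart a \<equiv> a \<squnion> z0"
abbreviation negpart where "negpart a \<equiv> neg a \<squnion> z0"

lemma pospart_ge0: "a \<in> C \<Longrightarrow> z0 \<preceq> pospart a" by (simp add: sup_ge2)
lemma negpart_ge0: "a \<in> C \<Longrightarrow> z0 \<preceq> negpart a" by (simp add: sup_ge2)
lemma le_pospart: "a \<in> C \<Longrightarrow> a \<preceq> pospart a" by (simp add: sup_ge1)
lemma pospart_minus_negpart: "a \<in> C \<Longrightarrow> pospart a \<ominus> negpart a = a"
proof -
  assume a: "a \<in> C"
  have "neg (negpart a) = a \<sqinter> z0" using a by (simp add: neg_sup)
  then have "pospart a \<ominus> negpart a = pospart a \<oplus> (a \<sqinter> z0)" by simp
  also have "\<dots> = a" using a by (simp add: sup_inf_sum)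
  finally show ?thesis .
qed
lemma pospart_inf_negpart: "a \<in> C \<Longrightarrow> pospart a \<sqinter> negpart a = z0"
proof -
  assume a: "a \<in> C"
  have "pospart a \<oplus> negpart a = (a \<oplus> negpart a) \<squnion> negpart a" using a by (simp add: sup_add)
  also have "a \<oplus> negpart a = z0 \<squnion> a" using a by (simp add: add_sup)
  also have "z0 \<squnion> a = pospart a" using a by (simp add: sup_comm)
  finally have e: "pospart a \<oplus> negpart a = pospart a \<squnion> negpart a" .
  have "(pospart a \<squnion> negpart a) \<oplus> (pospart a \<sqinter> negpart a) = pospart a \<oplus> negpart a" using a by (intro sup_inf_sum) simp_all
  also have "\<dots> = pospart a \<squnion> negpart a" by (rule e)
  also have "\<dots> = (pospart a \<squnion> negpart a) \<oplus> z0" using a by simp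
  finally have eq: "(pospart a \<squnion> negpart a) \<oplus> (pospart a \<sqinter> negpart a) = (pospart a \<squnion> negpart a) \<oplus> z0" .
  show ?thesis by (rule add_lcancel[OF _ _ _ eq]) (simp_all add: a)
qed
lemma pospart_disj: "x \<in> C \<Longrightarrow> y \<in> C \<Longrightarrow> z0 \<preceq> y \<Longrightarrow> x \<sqinter> y \<preceq> z0 \<Longrightarrow> pospart x \<sqinter> y = z0"
proof -
  assume h: "x \<in> C" "y \<in> C" "z0 \<preceq> y" "x \<sqinter> y \<preceq> z0"
  have "x \<oplus> y = (x \<squnion> y) \<oplus> (x \<sqinter> y)" using h by (simp add: sup_inf_sum)
  also have "\<dots> \<preceq> (x \<squnion> y) \<oplus> z0" using h add_le_iffl[of "x \<sqinter> y" z0 "x \<squnion> y"] by simp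
  finally have 1: "x \<oplus> y \<preceq> x \<squnion> y" using h by simp
  have "pospart x \<oplus> y = (x \<oplus> y) \<squnion> (z0 \<oplus> y)" using h by (simp add: sup_add)
  also have "\<dots> \<preceq> (x \<squnion> y) \<squnion> y" using h 1 by (intro sup_mono) simp_all
  also have "(x \<squnion> y) \<squnion> y = x \<squnion> y" using h by (simp add: sup_assoc)
  finally have 21: "pospart x \<oplus> y \<preceq> x \<squnion> y" .
  have 22: "x \<squnion> y \<preceq> pospart x \<squnion> y" using h by (intro sup_mono) (simp_all add: le_pospart)
  have 2: "pospart x \<oplus> y \<preceq> pospart x \<squnion> y" using h 21 22 le_trans[of "pospart x \<oplus> y" "x \<squnion> y" "pospart x \<squnion> y"] by simp
  have "(pospart x \<sqinter> y) \<oplus> (pospart x \<squnion> y) = pospart x \<oplus> y"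
    using h sup_inf_sum[of "pospart x" y] add_comm[of "pospart x \<sqinter> y" "pospart x \<squnion> y"] by simp
  then have "(pospart x \<sqinter> y) \<oplus> (pospart x \<squnion> y) \<preceq> pospart x \<squnion> y" using 2 by simp
  then have "pospart x \<sqinter> y \<preceq> z0" using h by (intro add_le_self) simp_all
  moreover have "z0 \<preceq> pospart x \<sqinter> y" using h by (intro inf_ge0) (simp_all add: pospart_ge0)
  ultimately show ?thesis using h by (intro le_antisym) simp_all
qed

lemma inf_add_le: "y \<in> C \<Longrightarrow> a \<in> C \<Longrightarrow> b \<in> C \<Longrightarrow> z0 \<preceq> y \<Longrightarrow> z0 \<preceq> a \<Longrightarrow> z0 \<preceq> b \<Longrightarrow>
   y \<sqinter> (a \<oplus> b) \<preceq> (y \<sqinter> a) \<oplus> (y \<sqinter> b)"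
proof -
  assume h: "y \<in> C" "a \<in> C" "b \<in> C" "z0 \<preceq> y" "z0 \<preceq> a" "z0 \<preceq> b"
  define z where "z = y \<sqinter> (a \<oplus> b)"
  have zC: "z \<in> C" using h z_def by simp
  have zy: "z \<preceq> y" and zab: "z \<preceq> a \<oplus> b" using h z_def by (simp_all add: inf_le1 inf_le2)
  have e: "z \<ominus> (y \<sqinter> a) = (z \<ominus> y) \<squnion> (z \<ominus> a)" using h zC by (simp add: neg_inf add_sup)
  have 1: "z \<ominus> y \<preceq> b"
  proof -
    have "z \<ominus> y \<preceq> z0" using h zC zy le_sub_iff[of z0 y z] sub_le_iff[of z0 y z] by simp
    then show ?thesis using h zC le_trans[of "z \<ominus> y" z0 b] by simp
  qed
  have 2: "z \<ominus> a \<preceq> b" using h zC zab sub_le_iff[of b a z] add_comm[of a b] by simp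
  have 3: "z \<ominus> (y \<sqinter> a) \<preceq> b" using e 1 2 h zC by (simp add: sup_least)
  have 4: "z \<ominus> (y \<sqinter> a) \<preceq> y"
  proof -
    have "y \<preceq> y \<oplus> (y \<sqinter> a)" using h by (intro le_add_pos) (simp_all add: inf_ge0)
    then have "z \<preceq> y \<oplus> (y \<sqinter> a)" using zy h zC le_trans by (meson closed(3) inf_cl)
    then show ?thesis using h zC sub_le_iff[of y "y \<sqinter> a" z] by simp
  qed
  have "z \<ominus> (y \<sqinter> a) \<preceq> y \<sqinter> b" using 3 4 h zC by (simp add: inf_greatest)
  then have "z \<preceq> (y \<sqinter> b) \<oplus> (y \<sqinter> a)" using h zC sub_le_iff[of "y \<sqinter> b" "y \<sqinter> a" z] by simp
  then show ?thesis using h z_def add_comm[of "y \<sqinter> b" "y \<sqinter> a"] by simp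
qed

lemma disj_mono: "x \<in> C \<Longrightarrow> y \<in> C \<Longrightarrow> z \<in> C \<Longrightarrow> z0 \<preceq> x \<Longrightarrow> z0 \<preceq> z \<Longrightarrow> z \<preceq> y \<Longrightarrow>
   x \<sqinter> y = z0 \<Longrightarrow> x \<sqinter> z = z0"
proof -
  assume h: "x \<in> C" "y \<in> C" "z \<in> C" "z0 \<preceq> x" "z0 \<preceq> z" "z \<preceq> y" "x \<sqinter> y = z0"
  have "x \<sqinter> z \<preceq> x \<sqinter> y" using h by (intro inf_mono) simp_all
  moreover have "z0 \<preceq> x \<sqinter> z" using h by (simp add: inf_ge0)
  ultimately show ?thesis using h by (intro le_antisym) simp_all
qed
lemma disj_add: "x \<in> C \<Longrightarrow> a \<in> C \<Longrightarrow> b \<in> C \<Longrightarrow> z0 \<preceq> x \<Longrightarrow> z0 \<preceq> a \<Longrightarrow> z0 \<preceq> b \<Longrightarrow>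
   x \<sqinter> a = z0 \<Longrightarrow> x \<sqinter> b = z0 \<Longrightarrow> x \<sqinter> (a \<oplus> b) = z0"
proof -
  assume h: "x \<in> C" "a \<in> C" "b \<in> C" "z0 \<preceq> x" "z0 \<preceq> a" "z0 \<preceq> b" "x \<sqinter> a = z0" "x \<sqinter> b = z0"
  have "x \<sqinter> (a \<oplus> b) \<preceq> z0" using inf_add_le[of x a b] h by simp
  moreover have "z0 \<preceq> x \<sqinter> (a \<oplus> b)" using h by (simp add: inf_ge0 pos_add)
  ultimately show ?thesis using h by (intro le_antisym) simp_all
qed
lemma disj_nat: "x \<in> C \<Longrightarrow> y \<in> C \<Longrightarrow> z0 \<preceq> x \<Longrightarrow> z0 \<preceq> y \<Longrightarrow> x \<sqinter> y = z0 \<Longrightarrow> x \<sqinter> (real n \<cdot> y) = z0"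
proof (induction n)
  case 0 then show ?case by (simp add: inf_absorb2)
next
  case (Suc n)
  have "real (Suc n) \<cdot> y = real n \<cdot> y \<oplus> y" using Suc.prems sm_radd[of y 1 "real n"] add_comm[of y "real n \<cdot> y"] by simp
  moreover have "z0 \<preceq> real n \<cdot> y" using Suc.prems by (simp add: sm_pos)
  ultimately show ?case using Suc disj_add[of x "real n \<cdot> y" y] by simp
qed

lemma lub_unique: "is_lub A U u \<Longrightarrow> is_lub A U v \<Longrightarrow> u = v"
  unfolding is_lub_def is_ub_def by (meson le_antisym)
lemma glb_unique: "is_glb A U u \<Longrightarrow> is_glb A U v \<Longrightarrow> u = v"
  unfolding is_glb_def is_lb_def by (meson le_antisym)
lemma glb_neg: "U \<subseteq> C \<Longrightarrow> is_glb A U u \<Longrightarrow> is_lub A (neg ` U) (neg u)"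
  unfolding is_glb_def is_lb_def is_lub_def is_ub_def
  by (smt (verit, ccfv_threshold) closed(5) image_iff neg_le neg_neg subset_eq)
lemma lub_neg: "U \<subseteq> C \<Longrightarrow> is_lub A U u \<Longrightarrow> is_glb A (neg ` U) (neg u)"
  unfolding is_glb_def is_lb_def is_lub_def is_ub_def
  by (smt (verit, ccfv_threshold) closed(5) image_iff neg_le neg_neg subset_eq)

lemma is_lub_singleton: "a \<in> C \<Longrightarrow> is_lub A {a} a"
  unfolding is_lub_def is_ub_def by simp

lemma meet_closed_lower_bound:
  assumes "finite P'" "P' \<noteq> {}" "P' \<subseteq> P" "P \<subseteq> C" and meet_closed: "\<And>x y. x \<in> P \<Longrightarrow> y \<in> P \<Longrightarrow> x \<sqinter> y \<in> P"
  shows "\<exists>a\<in>P. \<forall>x\<in>P'. a \<preceq> x"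
  using assms(1-3)
proof (induction P' rule: finite_ne_induct)
  case (singleton x)
  then show ?case using assms(4) by (intro bexI[of _ x]) auto
next
  case (insert x P'')
  then obtain a where a: "a \<in> P" "\<forall>z\<in>P''. a \<preceq> z" by auto
  have C: "a \<in> C" "x \<in> C" "P'' \<subseteq> C" using a insert.prems assms(4) by auto
  have "a \<sqinter> x \<preceq> z" if "z \<in> insert x P''" for z
    using that a C inf_le1[of a x] inf_le2[of a x] le_trans[of "a \<sqinter> x" a z] by auto
  then show ?case using meet_closed a insert.prems by blast
qed

lemma sm_Suc: "u \<in> C \<Longrightarrow> real (Suc n) \<cdot> u = real n \<cdot> u \<oplus> u"
  using sm_radd[of u 1 "real n"] add_comm[of u "real n \<cdot> u"] by simp

end

section \<open>Bounded archimedean algebras\<close>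

locale bal_alg = l_alg +
  assumes bounded: "bounded_l A" and archimedean: "archimedean_l A"
begin

lemma bounded_by_nat: "a \<in> C \<Longrightarrow> \<exists>n::nat. a \<preceq> real n \<cdot> u1"
  using bounded unfolding bounded_l_def by blast
lemma archimedean_le_zero: "a \<in> C \<Longrightarrow> b \<in> C \<Longrightarrow> (\<And>n::nat. real n \<cdot> a \<preceq> b) \<Longrightarrow> a \<preceq> z0"
  using archimedean unfolding archimedean_l_def by blast

lemma one_pos: "z0 \<preceq> u1"
proof -
  obtain n::nat where n: "neg u1 \<preceq> real n \<cdot> u1" using bounded_by_nat[of "neg u1"] by auto
  have "neg u1 \<oplus> u1 \<preceq> real n \<cdot> u1 \<oplus> u1" using n by (intro add_mono) simp_all
  moreover have "real n \<cdot> u1 \<oplus> u1 = (real n + 1) \<cdot> u1" using sm_radd[of u1 "real n" 1] by simp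
  ultimately have "z0 \<preceq> (real n + 1) \<cdot> u1" by simp
  then have "(1 / (real n + 1)) \<cdot> z0 \<preceq> (1 / (real n + 1)) \<cdot> ((real n + 1) \<cdot> u1)"
    by (intro sm_mono) simp_all
  also have "(1 / (real n + 1)) \<cdot> ((real n + 1) \<cdot> u1) = u1" by (intro sm_inv) simp_all
  finally show ?thesis by simp
qed

lemma sm_nat_bound: "y \<in> C \<Longrightarrow> z0 \<preceq> y \<Longrightarrow> \<exists>n::nat. r \<cdot> y \<preceq> real n \<cdot> y"
proof -
  assume h: "y \<in> C" "z0 \<preceq> y"
  obtain n::nat where "r \<le> real n" using real_arch_simple by blast
  then show ?thesis using sm_mono_r[of y r "real n"] h by blast
qed

lemma disj_sm: "x \<in> C \<Longrightarrow> y \<in> C \<Longrightarrow> z0 \<preceq> x \<Longrightarrow> z0 \<preceq> y \<Longrightarrow> 0 \<le> r \<Longrightarrow> x \<sqinter> y = z0 \<Longrightarrow> x \<sqinter> (r \<cdot> y) = z0"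
proof -
  assume h: "x \<in> C" "y \<in> C" "z0 \<preceq> x" "z0 \<preceq> y" "0 \<le> r" "x \<sqinter> y = z0"
  obtain n::nat where n: "r \<cdot> y \<preceq> real n \<cdot> y" using sm_nat_bound h by blast
  show ?thesis using disj_mono[of x "real n \<cdot> y" "r \<cdot> y"] disj_nat[of x y n] h n by (simp add: sm_pos)
qed

lemma mul_le_bound: "c \<in> C \<Longrightarrow> x \<in> C \<Longrightarrow> z0 \<preceq> x \<Longrightarrow> c \<preceq> r \<cdot> u1 \<Longrightarrow> x \<otimes> c \<preceq> r \<cdot> x"
proof -
  assume h: "c \<in> C" "x \<in> C" "z0 \<preceq> x" "c \<preceq> r \<cdot> u1"
  have "x \<otimes> c \<preceq> x \<otimes> (r \<cdot> u1)" using h by (intro mul_mono) simp_all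
  also have "x \<otimes> (r \<cdot> u1) = r \<cdot> x" using h sm_ml2[of x u1 r] by simp
  finally show ?thesis .
qed

lemma disj_mul_pos: "c \<in> C \<Longrightarrow> x \<in> C \<Longrightarrow> y \<in> C \<Longrightarrow> z0 \<preceq> c \<Longrightarrow> z0 \<preceq> x \<Longrightarrow> z0 \<preceq> y \<Longrightarrow>
  x \<sqinter> y = z0 \<Longrightarrow> y \<sqinter> (c \<otimes> x) = z0"
proof -
  assume h: "c \<in> C" "x \<in> C" "y \<in> C" "z0 \<preceq> c" "z0 \<preceq> x" "z0 \<preceq> y" "x \<sqinter> y = z0"
  obtain n::nat where n: "c \<preceq> real n \<cdot> u1" using bounded_by_nat h by blast
  have 1: "c \<otimes> x \<preceq> real n \<cdot> x" using mul_le_bound[of c x "real n"] h n mul_comm[of c x] by simp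
  have 2: "y \<sqinter> (real n \<cdot> x) = z0" using disj_nat[of y x n] h inf_comm[of x y] by simp
  show ?thesis using disj_mono[of y "real n \<cdot> x" "c \<otimes> x"] h 1 2 by (simp add: mul_pos)
qed

lemma disj_mul0: "x \<in> C \<Longrightarrow> y \<in> C \<Longrightarrow> z0 \<preceq> x \<Longrightarrow> z0 \<preceq> y \<Longrightarrow> x \<sqinter> y = z0 \<Longrightarrow> x \<otimes> y = z0"
proof -
  assume h: "x \<in> C" "y \<in> C" "z0 \<preceq> x" "z0 \<preceq> y" "x \<sqinter> y = z0"
  have 1: "x \<sqinter> (x \<otimes> y) = z0" using disj_mul_pos[of x y x] h inf_comm[of x y] by simp
  obtain n::nat where n: "y \<preceq> real n \<cdot> u1" using bounded_by_nat h by blast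
  have 2: "x \<otimes> y \<preceq> real n \<cdot> x" using mul_le_bound[of y x "real n"] h n by simp
  have 3: "(x \<otimes> y) \<sqinter> (real n \<cdot> x) = z0"
    using disj_nat[of "x \<otimes> y" x n] h 1 inf_comm[of x "x \<otimes> y"] by (simp add: mul_pos)
  have "(x \<otimes> y) \<sqinter> (x \<otimes> y) = z0" using disj_mono[of "x \<otimes> y" "real n \<cdot> x" "x \<otimes> y"] h 2 3 by (simp add: mul_pos)
  then show ?thesis using h by simp
qed

lemma sq_pos: "a \<in> C \<Longrightarrow> z0 \<preceq> a \<otimes> a"
proof -
  assume a: "a \<in> C"
  define p where "p = pospart a"
  define q where "q = negpart a"
  have pC: "p \<in> C" "q \<in> C" "z0 \<preceq> p" "z0 \<preceq> q" using a p_def q_def by (simp_all add: pospart_ge0 negpart_ge0)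
  have pq: "p \<otimes> q = z0" using disj_mul0[of p q] pC pospart_inf_negpart[OF a] p_def q_def by simp
  have ae: "a = p \<ominus> q" using pospart_minus_negpart[of a] a p_def q_def by simp
  have "a \<otimes> a = (p \<ominus> q) \<otimes> (p \<ominus> q)" using ae by simp
  also have "\<dots> = p \<otimes> p \<ominus> p \<otimes> q \<ominus> (q \<otimes> p \<ominus> q \<otimes> q)"
    using pC add_lcomm[of "neg (q \<otimes> p)" "neg (p \<otimes> q)" "q \<otimes> q"] by (simp add: distr distr2 mul_neg mul_negl neg_add add_assoc)
  also have "\<dots> = p \<otimes> p \<oplus> q \<otimes> q" using pq mul_comm[of q p] pC by simp
  finally show ?thesis using pC by (simp add: pos_add mul_pos)
qed

lemma idem_pos: "e \<in> C \<Longrightarrow> e \<otimes> e = e \<Longrightarrow> z0 \<preceq> e"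
  using sq_pos[of e] by simp
lemma idem_le1: "e \<in> C \<Longrightarrow> e \<otimes> e = e \<Longrightarrow> e \<preceq> u1"
proof -
  assume h: "e \<in> C" "e \<otimes> e = e"
  have "(u1 \<ominus> e) \<otimes> (u1 \<ominus> e) = u1 \<ominus> e \<ominus> e \<oplus> e \<otimes> e"
    using h by (simp add: distr distr2 mul_neg mul_negl neg_add add_assoc)
  also have "\<dots> = u1 \<ominus> e" using h by (simp add: add_assoc)
  finally have "z0 \<preceq> u1 \<ominus> e" using sq_pos[of "u1 \<ominus> e"] h by simp
  then show ?thesis using le_sub0[of e u1] h by simp
qed

lemma mul_sup: "c \<in> C \<Longrightarrow> a \<in> C \<Longrightarrow> b \<in> C \<Longrightarrow> z0 \<preceq> c \<Longrightarrow> c \<otimes> (a \<squnion> b) = c \<otimes> a \<squnion> c \<otimes> b"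
proof -
  assume h: "c \<in> C" "a \<in> C" "b \<in> C" "z0 \<preceq> c"
  define s where "s = a \<squnion> b"
  define x where "x = s \<ominus> a"
  define y where "y = s \<ominus> b"
  have C: "s \<in> C" "x \<in> C" "y \<in> C" using h s_def x_def y_def by simp_all
  have x0: "z0 \<preceq> x" using le_sub0[of a s] h s_def x_def by (simp add: sup_ge1)
  have y0: "z0 \<preceq> y" using le_sub0[of b s] h s_def y_def by (simp add: sup_ge2)
  have "x \<sqinter> y = s \<oplus> (neg a \<sqinter> neg b)" using h C x_def y_def by (simp add: add_inf)
  also have "\<dots> = z0" using h s_def by (simp add: neg_sup[symmetric])
  finally have xy: "x \<sqinter> y = z0" .
  have 1: "y \<sqinter> (c \<otimes> x) = z0" using disj_mul_pos[of c x y] h C x0 y0 xy by simp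
  have 2: "(c \<otimes> x) \<sqinter> (c \<otimes> y) = z0"
    using disj_mul_pos[of c y "c \<otimes> x"] h C x0 y0 1 by (simp add: mul_pos)
  have ea: "c \<otimes> a = c \<otimes> s \<ominus> c \<otimes> x" using h C x_def by (simp add: distr mul_neg neg_add)
  have eb: "c \<otimes> b = c \<otimes> s \<ominus> c \<otimes> y" using h C y_def by (simp add: distr mul_neg neg_add)
  have "c \<otimes> a \<squnion> c \<otimes> b = c \<otimes> s \<oplus> neg ((c \<otimes> x) \<sqinter> (c \<otimes> y))"
    using ea eb h C by (simp add: add_sup neg_inf)
  also have "\<dots> = c \<otimes> s" using 2 h C by simp
  finally show ?thesis using s_def by simp
qed
lemma mul_inf: "c \<in> C \<Longrightarrow> a \<in> C \<Longrightarrow> b \<in> C \<Longrightarrow> z0 \<preceq> c \<Longrightarrow> c \<otimes> (a \<sqinter> b) = c \<otimes> a \<sqinter> c \<otimes> b"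
proof -
  assume h: "c \<in> C" "a \<in> C" "b \<in> C" "z0 \<preceq> c"
  have "c \<otimes> (a \<sqinter> b) = c \<otimes> neg (neg a \<squnion> neg b)" using h by (simp add: neg_sup)
  also have "\<dots> = neg (c \<otimes> neg a \<squnion> c \<otimes> neg b)" using h by (simp add: mul_neg mul_sup)
  also have "\<dots> = c \<otimes> a \<sqinter> c \<otimes> b" using h by (simp add: neg_sup mul_neg)
  finally show ?thesis .
qed

lemma sub_pos_le: "v \<in> C \<Longrightarrow> w \<in> C \<Longrightarrow> z0 \<preceq> w \<Longrightarrow> v \<ominus> w \<preceq> v"
  using le_add_pos[of "v \<ominus> w" w] by simp

lemma disj_sup: "U \<subseteq> C \<Longrightarrow> U \<noteq> {} \<Longrightarrow> (\<And>a. a \<in> U \<Longrightarrow> z0 \<preceq> a \<and> x \<sqinter> a = z0) \<Longrightarrow>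
  x \<in> C \<Longrightarrow> z0 \<preceq> x \<Longrightarrow> is_lub A U s \<Longrightarrow> x \<sqinter> s = z0"
proof -
  assume h: "U \<subseteq> C" "U \<noteq> {}" "\<And>a. a \<in> U \<Longrightarrow> z0 \<preceq> a \<and> x \<sqinter> a = z0" "x \<in> C" "z0 \<preceq> x" "is_lub A U s"
  have sC: "s \<in> C" using h unfolding is_lub_def is_ub_def by blast
  have ub: "\<And>a. a \<in> U \<Longrightarrow> a \<preceq> s" using h unfolding is_lub_def is_ub_def by blast
  obtain a0 where a0: "a0 \<in> U" using h by blast
  have a0p: "z0 \<preceq> a0" using h(3)[OF a0] by blast
  have a0C: "a0 \<in> C" using a0 h(1) by blast
  have s0: "z0 \<preceq> s" using le_trans[of z0 a0 s] a0p ub[OF a0] a0C sC by simp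
  define m where "m = pospart (s \<ominus> x)"
  have mC: "m \<in> C" using m_def sC h by simp
  have "\<And>a. a \<in> U \<Longrightarrow> a \<preceq> m"
  proof -
    fix a assume a: "a \<in> U"
    have aC: "a \<in> C" using a h by blast
    have "a = a \<ominus> (x \<sqinter> a)" using h(3)[OF a] aC by simp
    also have "\<dots> = (a \<ominus> x) \<squnion> z0" using aC h by (simp add: neg_inf add_sup)
    finally have "a = pospart (a \<ominus> x)" .
    moreover have "pospart (a \<ominus> x) \<preceq> m" unfolding m_def using aC sC h ub[OF a] by (intro sup_mono) (simp_all add: add_mono)
    ultimately show "a \<preceq> m" by simp
  qed
  then have "s \<preceq> m" using h mC unfolding is_lub_def is_ub_def by blast
  have e1: "s \<oplus> (x \<ominus> s) = x" using h sC add_comm[of s "x \<ominus> s"] by simp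
  have "x \<sqinter> s = (s \<oplus> (x \<ominus> s)) \<sqinter> (s \<oplus> z0)" using e1 sC by simp
  also have "\<dots> = s \<oplus> ((x \<ominus> s) \<sqinter> z0)" by (rule add_inf[symmetric]) (simp_all add: h sC)
  also have "(x \<ominus> s) \<sqinter> z0 = neg m" using h sC m_def by (simp add: neg_sup neg_add add_comm)
  finally have e: "x \<sqinter> s = s \<ominus> m" .
  have "s \<ominus> m \<preceq> z0" using \<open>s \<preceq> m\<close> le_sub0[of s m] sC mC sub_le_iff[of z0 m s] by simp
  then have 1: "x \<sqinter> s \<preceq> z0" using e by simp
  have 2: "z0 \<preceq> x \<sqinter> s" using h sC s0 by (simp add: inf_ge0)
  show ?thesis using 1 2 h sC by (intro le_antisym) simp_all
qed

lemma sm_le_one_if_inf_nonpos: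
  assumes u: "u \<in> C" "z0 \<preceq> u" and k: "0 \<le> k" and m: "(k \<cdot> u \<ominus> u1) \<sqinter> u \<preceq> z0"
  shows "k \<cdot> u \<preceq> u1"
proof -
  define v where "v = pospart (k \<cdot> u \<ominus> u1)"
  have vC: "v \<in> C" and v0: "z0 \<preceq> v" using v_def u by (simp_all add: pospart_ge0)
  have vu: "v \<sqinter> u = z0" using pospart_disj[OF _ u(1,2) m] v_def u by simp
  have vle: "v \<preceq> k \<cdot> u" unfolding v_def using u k one_pos
    by (intro sup_least) (simp_all add: sub_pos_le sm_pos)
  have "v \<sqinter> (k \<cdot> u) = z0" using disj_sm[OF vC u(1) v0 u(2) k vu] .
  then have "v \<sqinter> v = z0" using disj_mono[of v "k \<cdot> u" v] vC u v0 vle by simp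
  then have "v = z0" using vC by simp
  then have "k \<cdot> u \<ominus> u1 \<preceq> z0" using v_def u le_pospart[of "k \<cdot> u \<ominus> u1"] by simp
  then show ?thesis using u le_sub0[of "k \<cdot> u" u1] sub_le_iff[of z0 u1 "k \<cdot> u"] by simp
qed

end

section \<open>Basic algebras and coordinates at atoms\<close>

locale basic_alg = bal_alg +
  assumes complete: "dedekind_complete A" and atomic: "idems_atomic A"
begin

lemma bounded_above_has_lub: "U \<subseteq> C \<Longrightarrow> U \<noteq> {} \<Longrightarrow> b \<in> C \<Longrightarrow> (\<And>a. a \<in> U \<Longrightarrow> a \<preceq> b) \<Longrightarrow> \<exists>s. is_lub A U s"
  using complete unfolding dedekind_complete_def is_ub_def by blast

lemma bounded_below_has_glb: "U \<subseteq> C \<Longrightarrow> U \<noteq> {} \<Longrightarrow> b \<in> C \<Longrightarrow> (\<And>a. a \<in> U \<Longrightarrow> b \<preceq> a) \<Longrightarrow> \<exists>s. is_glb A U s"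
proof -
  assume h: "U \<subseteq> C" "U \<noteq> {}" "b \<in> C" "\<And>a. a \<in> U \<Longrightarrow> b \<preceq> a"
  have "\<exists>s. is_lub A (neg ` U) s"
  proof (rule bounded_above_has_lub[of _ "neg b"])
    fix x assume "x \<in> neg ` U"
    then obtain a where a: "a \<in> U" "x = neg a" by blast
    then show "x \<preceq> neg b" using h(4)[OF a(1)] h neg_le[of b a] by auto
  qed (use h in auto)
  then obtain s where s: "is_lub A (neg ` U) s" by blast
  have sC: "s \<in> C" using s unfolding is_lub_def is_ub_def by blast
  have nU: "neg ` U \<subseteq> C" using h(1) by auto
  have "is_glb A (neg ` neg ` U) (neg s)" using lub_neg[OF nU s] .
  moreover have "neg ` neg ` U = U" using h(1) by (force simp: image_iff)
  ultimately show ?thesis by auto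
qed

definition supp where "supp c = (SOME e. is_lub A ((\<lambda>n::nat. real n \<cdot> c \<sqinter> u1) ` UNIV) e)"

lemma supp_lub: "c \<in> C \<Longrightarrow> is_lub A ((\<lambda>n::nat. real n \<cdot> c \<sqinter> u1) ` UNIV) (supp c)"
proof -
  assume c: "c \<in> C"
  have "\<exists>s. is_lub A ((\<lambda>n::nat. real n \<cdot> c \<sqinter> u1) ` UNIV) s"
    by (rule bounded_above_has_lub[of _ u1]) (auto simp: c inf_le2)
  then show ?thesis unfolding supp_def by (rule someI_ex)
qed

lemma supp_props: assumes c: "c \<in> C" "z0 \<preceq> c"
  shows "supp c \<in> C" "z0 \<preceq> supp c" "supp c \<preceq> u1" "c \<sqinter> u1 \<preceq> supp c"
    "\<And>n::nat. real n \<cdot> c \<sqinter> u1 \<preceq> supp c"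
proof -
  note L = supp_lub[OF c(1)]
  show C: "supp c \<in> C" using L unfolding is_lub_def is_ub_def by blast
  show n: "\<And>n::nat. real n \<cdot> c \<sqinter> u1 \<preceq> supp c" using L unfolding is_lub_def is_ub_def by blast
  show "supp c \<preceq> u1" using L c unfolding is_lub_def is_ub_def by (auto simp: inf_le2)
  show "c \<sqinter> u1 \<preceq> supp c" using n[of 1] c by simp
  have "z0 \<preceq> real 0 \<cdot> c \<sqinter> u1" using c one_pos by (simp add: inf_absorb)
  then show "z0 \<preceq> supp c" using n[of 0] c C le_trans[of z0 "real 0 \<cdot> c \<sqinter> u1" "supp c"] by simp
qed

lemma supp_disj: assumes c: "c \<in> C" "z0 \<preceq> c" and z: "z \<in> C" "z0 \<preceq> z" "z \<sqinter> c = z0"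
  shows "z \<sqinter> supp c = z0"
proof (rule disj_sup[OF _ _ _ z(1,2) supp_lub[OF c(1)]])
  fix a assume "a \<in> (\<lambda>n::nat. real n \<cdot> c \<sqinter> u1) ` UNIV"
  then obtain n::nat where a: "a = real n \<cdot> c \<sqinter> u1" by blast
  have 1: "z \<sqinter> (real n \<cdot> c) = z0" using disj_nat[of z c n] z c by simp
  have 2: "z0 \<preceq> real n \<cdot> c \<sqinter> u1" using c one_pos by (simp add: inf_ge0 sm_pos)
  show "z0 \<preceq> a \<and> z \<sqinter> a = z0" using a 2 disj_mono[of z "real n \<cdot> c" "real n \<cdot> c \<sqinter> u1"] 1 z c
    by (simp add: inf_le1)
qed (use c in auto)

text \<open>The part \<open>u\<close> of \<open>c\<close> outside its support satisfies \<open>(n + 1) u \<le> 1\<close> for all \<open>n\<close>, hence vanishes.\<close>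

lemma supp_comp_disj: assumes c: "c \<in> C" "z0 \<preceq> c" shows "(u1 \<ominus> supp c) \<sqinter> c = z0"
proof -
  define e where "e = supp c"
  define d where "d = u1 \<ominus> e"
  define u where "u = c \<sqinter> d"
  note sp = supp_props[OF c, folded e_def]
  have eC: "e \<in> C" and dC: "d \<in> C" and uC: "u \<in> C" using sp d_def u_def c by simp_all
  have d0: "z0 \<preceq> d" using le_sub0[of e u1] sp d_def by simp
  have u0: "z0 \<preceq> u" using u_def c d0 dC by (simp add: inf_ge0)
  have uc: "u \<preceq> c" and ud: "u \<preceq> d" using u_def c dC by (simp_all add: inf_le1 inf_le2)
  have ed: "e = u1 \<ominus> d" using d_def eC by (simp add: neg_add)
  have "real (Suc n) \<cdot> u \<preceq> u1" for n::nat
  proof (rule sm_le_one_if_inf_nonpos[OF uC u0])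
    have h1: "real n \<cdot> u \<sqinter> u1 \<preceq> real n \<cdot> c \<sqinter> u1" using uC c uc by (intro inf_mono) (simp_all add: sm_mono)
    have h3: "e \<preceq> u1 \<ominus> u" using ed ud uC dC neg_le[of u d] add_le_iffl by simp
    have "real n \<cdot> u \<sqinter> u1 \<preceq> e" using h1 sp(5)[of n] le_trans uC c eC by (meson closed(2) closed(6) inf_cl)
    then have "real n \<cdot> u \<sqinter> u1 \<preceq> u1 \<ominus> u" using h3 le_trans uC eC by (meson closed(2) closed(3) closed(5) closed(6) inf_cl)
    then have "(real n \<cdot> u \<sqinter> u1) \<oplus> u \<preceq> u1" using le_sub_iff[of "real n \<cdot> u \<sqinter> u1" u u1] uC by simp
    moreover have "(real n \<cdot> u \<sqinter> u1) \<oplus> u = (real (Suc n) \<cdot> u) \<sqinter> (u1 \<oplus> u)"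
      using uC inf_add[of "real n \<cdot> u" u1 u] sm_Suc[of u n] by simp
    ultimately have "(real (Suc n) \<cdot> u) \<sqinter> (u1 \<oplus> u) \<preceq> u1" by simp
    then have "((real (Suc n) \<cdot> u) \<sqinter> (u1 \<oplus> u)) \<ominus> u1 \<preceq> z0"
      using uC sub_le_iff[of z0 u1 "(real (Suc n) \<cdot> u) \<sqinter> (u1 \<oplus> u)"] by simp
    moreover have "((real (Suc n) \<cdot> u) \<sqinter> (u1 \<oplus> u)) \<ominus> u1 = (real (Suc n) \<cdot> u \<ominus> u1) \<sqinter> u"
      using uC inf_add[of "real (Suc n) \<cdot> u" "u1 \<oplus> u" "neg u1"] add_comm[of u1 u] by simp
    ultimately show "(real (Suc n) \<cdot> u \<ominus> u1) \<sqinter> u \<preceq> z0" by simp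
  qed simp
  then have "real n \<cdot> u \<preceq> u1" for n::nat using one_pos uC by (cases n) simp_all
  then have "u \<preceq> z0" using archimedean_le_zero[of u u1] uC by simp
  then have "u = z0" using u0 uC by (intro le_antisym) simp_all
  then show ?thesis using u_def d_def e_def inf_comm[of c d] c dC by simp
qed

lemma supp_idem: assumes c: "c \<in> C" "z0 \<preceq> c" shows "supp c \<otimes> supp c = supp c"
proof -
  note sp = supp_props[OF c]
  define d where "d = u1 \<ominus> supp c"
  have dC: "d \<in> C" using d_def sp by simp
  have d0: "z0 \<preceq> d" using le_sub0[of "supp c" u1] sp d_def by simp
  have "d \<sqinter> c = z0" using supp_comp_disj[OF c] d_def by simp
  then have "d \<sqinter> supp c = z0" using supp_disj[OF c dC d0] by simp
  then have "d \<otimes> supp c = z0" using disj_mul0[of d "supp c"] dC d0 sp by simp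
  then have "supp c \<ominus> supp c \<otimes> supp c = z0" using d_def sp by (simp add: distr2 mul_negl)
  then show ?thesis using sp sub_eq0[of "supp c" "supp c \<otimes> supp c"] by simp
qed

lemma supp_ne: assumes c: "c \<in> C" "z0 \<preceq> c" "c \<noteq> z0" shows "supp c \<noteq> z0"
proof
  assume e: "supp c = z0"
  have "z0 \<preceq> c \<sqinter> u1" using c one_pos by (simp add: inf_ge0)
  then have cu: "c \<sqinter> u1 = z0" using supp_props(4)[OF c(1,2)] e c by (intro le_antisym) simp_all
  obtain n::nat where n: "c \<preceq> real n \<cdot> u1" using bounded_by_nat c by blast
  have "c \<sqinter> (real n \<cdot> u1) = z0" using disj_nat[of c u1 n] c cu one_pos by simp
  then have "c \<sqinter> c = z0" using disj_mono[of c "real n \<cdot> u1" c] c n by simp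
  then show False using c by simp
qed

abbreviation atom where "atom p \<equiv> idem_atom A p"

lemma atomD: assumes "atom p"
  shows "p \<in> C" "p \<otimes> p = p" "p \<noteq> z0" "z0 \<preceq> p" "p \<preceq> u1"
    "\<And>f. f \<in> C \<Longrightarrow> f \<otimes> f = f \<Longrightarrow> f \<otimes> p = f \<Longrightarrow> f = z0 \<or> f = p"
  using assms unfolding idem_atom_def idems_def
  by (auto intro: idem_pos idem_le1)

lemma idem_mul_absorb: assumes p: "p \<in> C" "p \<otimes> p = p" and y: "y \<in> C" "z0 \<preceq> y" "y \<preceq> r \<cdot> p"
  shows "p \<otimes> y = y"
proof -
  have q0: "z0 \<preceq> u1 \<ominus> p" using le_sub0[of p u1] idem_le1[OF p] p by simp
  have "(u1 \<ominus> p) \<otimes> y \<preceq> (u1 \<ominus> p) \<otimes> (r \<cdot> p)" using q0 p y by (intro mul_mono) simp_all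
  also have "(u1 \<ominus> p) \<otimes> (r \<cdot> p) = r \<cdot> ((u1 \<ominus> p) \<otimes> p)" using p by (simp add: sm_ml2)
  also have "(u1 \<ominus> p) \<otimes> p = z0" using p by (simp add: distr2 mul_negl)
  finally have 1: "(u1 \<ominus> p) \<otimes> y \<preceq> z0" by simp
  have 2: "z0 \<preceq> (u1 \<ominus> p) \<otimes> y" using q0 p y by (simp add: mul_pos)
  have "(u1 \<ominus> p) \<otimes> y = z0" using 1 2 p y by (intro le_antisym) simp_all
  then have "y \<ominus> p \<otimes> y = z0" using p y by (simp add: distr2 mul_negl)
  then show ?thesis using sub_eq0[of y "p \<otimes> y"] p y by simp
qed

lemma atom_sm_le0: assumes "atom p" "0 < s" "s \<cdot> p \<preceq> z0" shows False
proof -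
  note P = atomD[OF assms(1)]
  have "(1/s) \<cdot> (s \<cdot> p) \<preceq> (1/s) \<cdot> z0" using assms P by (intro sm_mono) simp_all
  then have "p \<preceq> z0" using sm_inv[of p s] P assms by simp
  then show False using P by (metis le_antisym closed(1))
qed

lemma atom_sm_le: assumes "atom p" "z0 \<preceq> s \<cdot> p \<ominus> t \<cdot> p" shows "t \<le> s"
proof (rule ccontr)
  assume "\<not> t \<le> s"
  note P = atomD[OF assms(1)]
  have "s \<cdot> p \<ominus> t \<cdot> p = neg ((t - s) \<cdot> p)" using P by (simp add: sm_sub neg_add add_comm)
  then have "(t - s) \<cdot> p \<preceq> z0" using assms P neg_ge0[of "(t - s) \<cdot> p"] by simp
  then show False using atom_sm_le0[OF assms(1), of "t - s"] \<open>\<not> t \<le> s\<close> by simp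
qed

lemma atom_sm_le_iff: assumes "atom p" shows "s \<cdot> p \<preceq> t \<cdot> p \<longleftrightarrow> s \<le> t"
proof
  note P = atomD[OF assms(1)]
  assume "s \<cdot> p \<preceq> t \<cdot> p"
  then show "s \<le> t" using atom_sm_le[OF assms, of t s] le_sub0[of "s \<cdot> p" "t \<cdot> p"] P by simp
next
  note P = atomD[OF assms(1)]
  assume "s \<le> t" then show "s \<cdot> p \<preceq> t \<cdot> p" using sm_mono_r P by simp
qed

lemma atom_sm_inj: assumes "atom p" "s \<cdot> p = t \<cdot> p" shows "s = t"
  using atom_sm_le_iff[OF assms(1)] assms(2) atomD[OF assms(1)] by (metis le_refl closed(6) order_antisym)

lemma sub_mono: "x \<in> C \<Longrightarrow> y \<in> C \<Longrightarrow> w \<in> C \<Longrightarrow> w \<preceq> y \<Longrightarrow> x \<ominus> y \<preceq> x \<ominus> w"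
  using add_le_iffl[of "neg y" "neg w" x] neg_le[of w y] by simp

lemma idem_mul_idem: "p \<in> C \<Longrightarrow> f \<in> C \<Longrightarrow> p \<otimes> p = p \<Longrightarrow> f \<otimes> f = f \<Longrightarrow> (p \<otimes> f) \<otimes> (p \<otimes> f) = p \<otimes> f"
proof -
  assume h: "p \<in> C" "f \<in> C" "p \<otimes> p = p" "f \<otimes> f = f"
  have "(p \<otimes> f) \<otimes> (p \<otimes> f) = p \<otimes> (f \<otimes> (p \<otimes> f))" using h by (simp add: mul_assoc)
  also have "f \<otimes> (p \<otimes> f) = p \<otimes> (f \<otimes> f)" using h by (intro mul_lcomm) simp_all
  finally show ?thesis using h by (simp add: mul_assoc[symmetric])
qed
lemma idem_mul_right: "p \<in> C \<Longrightarrow> f \<in> C \<Longrightarrow> p \<otimes> p = p \<Longrightarrow> (p \<otimes> f) \<otimes> p = p \<otimes> f"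
proof -
  assume h: "p \<in> C" "f \<in> C" "p \<otimes> p = p"
  have "(p \<otimes> f) \<otimes> p = p \<otimes> (f \<otimes> p)" using h by (simp add: mul_assoc)
  also have "f \<otimes> p = p \<otimes> f" using h by (intro mul_comm) simp_all
  finally show ?thesis using h by (simp add: mul_assoc[symmetric])
qed

lemma atom_le_or_ge:
  assumes at: "atom p" and x: "x \<in> C" "z0 \<preceq> x" "x \<preceq> M \<cdot> p"
  shows "x \<preceq> p \<or> p \<preceq> x"
proof -
  note P = atomD[OF at]
  define v where "v = pospart (p \<ominus> x)"
  define w where "w = negpart (p \<ominus> x)"
  define f where "f = supp v"
  have vC: "v \<in> C" and wC: "w \<in> C" and v0: "z0 \<preceq> v" and w0: "z0 \<preceq> w"
    using v_def w_def P x by (simp_all add: pospart_ge0 negpart_ge0)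
  note sp = supp_props[OF vC v0, folded f_def]
  have fi: "f \<otimes> f = f" using supp_idem[OF vC v0] f_def by simp
  have "p \<otimes> f = z0 \<or> p \<otimes> f = p"
    using P(6)[of "p \<otimes> f"] idem_mul_idem[OF P(1) sp(1) P(2) fi] idem_mul_right[OF P(1) sp(1) P(2)] P sp by simp
  then show ?thesis
  proof
    assume pf: "p \<otimes> f = z0"
    have vp: "v \<preceq> p" unfolding v_def using P x by (intro sup_least) (simp_all add: sub_pos_le)
    have "v \<sqinter> u1 = v" using vp P vC le_trans[of v p u1] by (simp add: inf_absorb)
    then have "v \<preceq> f" using sp(4) by simp
    then have "p \<otimes> v \<preceq> p \<otimes> f" using P vC sp by (intro mul_mono) simp_all
    moreover have "p \<otimes> v = v" using idem_mul_absorb[OF P(1,2) vC v0, of 1] vp P by simp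
    ultimately have "v \<preceq> z0" using pf by simp
    then have "p \<ominus> x \<preceq> z0" using v_def le_pospart[of "p \<ominus> x"] le_trans P x
      by (meson closed(1) closed(3) closed(5) sup_cl)
    then have "p \<preceq> x" using P x le_sub0[of p x] neg_ge0[of "p \<ominus> x"] by (simp add: neg_add add_comm)
    then show ?thesis by blast
  next
    assume pf: "p \<otimes> f = p"
    have "w \<sqinter> v = z0" using pospart_inf_negpart[of "p \<ominus> x"] v_def w_def inf_comm[of v w] vC wC P x by simp
    then have "w \<sqinter> f = z0" using supp_disj[OF vC v0 wC w0] f_def by simp
    then have wf: "w \<otimes> f = z0" using disj_mul0[OF wC sp(1) w0 sp(2)] by blast
    have "neg (p \<ominus> x) = x \<ominus> p" using P x by (simp add: neg_add add_comm)
    then have "w \<preceq> x" unfolding w_def using P x by (intro sup_least) (simp_all add: sub_pos_le)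
    then have "w \<preceq> M \<cdot> p" using x(3) le_trans P x wC by (meson closed(6))
    then have "p \<otimes> w = w" using idem_mul_absorb[OF P(1,2) wC w0] by simp
    then have "w = (p \<otimes> f) \<otimes> w" using pf by simp
    also have "\<dots> = p \<otimes> (w \<otimes> f)" using P sp wC by (simp add: mul_assoc mul_comm[of f w])
    finally have "w = z0" using wf P by simp
    then have "neg (p \<ominus> x) \<preceq> z0" using w_def sup_ge1[of "neg (p \<ominus> x)" z0] P x by simp
    then have "z0 \<preceq> p \<ominus> x" using neg_le0[of "p \<ominus> x"] P x by simp
    then show ?thesis using le_sub0[of x p] P x by simp
  qed
qed

lemma atom_greatest_multiple_below:
  assumes at: "atom p" and y: "y \<in> C" "z0 \<preceq> y" "y \<preceq> real N \<cdot> p"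
  shows "\<exists>r. 0 \<le> r \<and> r \<cdot> p \<preceq> y \<and> (\<forall>t. t \<cdot> p \<preceq> y \<longrightarrow> t \<le> r)"
proof -
  note P = atomD[OF at]
  define T where "T = {t. t \<cdot> p \<preceq> y}"
  have T0: "0 \<in> T" using T_def y P by simp
  have "t \<le> real N" if "t \<in> T" for t
  proof -
    have "t \<cdot> p \<preceq> real N \<cdot> p" using that T_def y le_trans P by (metis closed(6) mem_Collect_eq)
    then show ?thesis using atom_sm_le_iff[OF at] by simp
  qed
  then have bdd: "bdd_above T" by (intro bdd_aboveI)
  define r where "r = Sup T"
  have rT: "t \<le> r" if "t \<in> T" for t using cSup_upper[OF that bdd] r_def by simp
  have approx: "(r - 1/real n) \<cdot> p \<preceq> y" if "n \<ge> 1" for n::nat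
  proof -
    have "r - 1/real n < r" using that by simp
    then obtain t where t: "t \<in> T" "r - 1/real n < t" using less_cSup_iff[of T] T0 bdd r_def by blast
    then have "(r - 1/real n) \<cdot> p \<preceq> t \<cdot> p" using atom_sm_le_iff[OF at] by simp
    moreover have "t \<cdot> p \<preceq> y" using t T_def by simp
    ultimately show ?thesis using le_trans P y by (meson closed(6))
  qed
  have "real n \<cdot> (r \<cdot> p \<ominus> y) \<preceq> p" for n::nat
  proof (cases "n = 0")
    case True then show ?thesis using P y by simp
  next
    case False
    then have "r \<cdot> p \<ominus> y \<preceq> r \<cdot> p \<ominus> (r - 1/real n) \<cdot> p" using approx P y by (intro sub_mono) simp_all
    also have "r \<cdot> p \<ominus> (r - 1/real n) \<cdot> p = (1/real n) \<cdot> p" using sm_sub[of p r "r - 1/real n"] P by simp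
    finally have "real n \<cdot> (r \<cdot> p \<ominus> y) \<preceq> real n \<cdot> ((1/real n) \<cdot> p)" using P y by (intro sm_mono) simp_all
    also have "real n \<cdot> ((1/real n) \<cdot> p) = p" using sm_mul[of p "real n" "1/real n"] False P by simp
    finally show ?thesis .
  qed
  then have "r \<cdot> p \<ominus> y \<preceq> z0" using archimedean_le_zero[of "r \<cdot> p \<ominus> y" p] P y by simp
  then have "r \<cdot> p \<preceq> y" using P y sub_le_iff[of z0 y "r \<cdot> p"] by simp
  moreover have "0 \<le> r" using rT T0 by simp
  ultimately show ?thesis using rT T_def by blast
qed

text \<open>With \<open>r\<close> the greatest multiple of \<open>p\<close> below \<open>y\<close>, the rest \<open>c = y - r p\<close> satisfies \<open>n c \<le> p\<close> for all \<open>n\<close>,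
  since \<open>p \<le> n c\<close> would make \<open>r + 1/n\<close> a larger one.\<close>

lemma atom_below_multiple: assumes at: "atom p" and y: "y \<in> C" "z0 \<preceq> y" "p \<otimes> y = y"
  shows "\<exists>t. 0 \<le> t \<and> y = t \<cdot> p"
proof -
  note P = atomD[OF at]
  obtain N::nat where yN: "y \<preceq> real N \<cdot> u1" using bounded_by_nat y by blast
  have "p \<otimes> y \<preceq> p \<otimes> (real N \<cdot> u1)" using P y yN by (intro mul_mono) simp_all
  then have yNp: "y \<preceq> real N \<cdot> p" using y P by (simp add: sm_ml2[symmetric])
  obtain r where r: "0 \<le> r" "r \<cdot> p \<preceq> y" and r_max: "\<And>t. t \<cdot> p \<preceq> y \<Longrightarrow> t \<le> r"
    using atom_greatest_multiple_below[OF at y(1,2) yNp] by blast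
  define c where "c = y \<ominus> r \<cdot> p"
  have cC: "c \<in> C" using c_def P y by simp
  have c0: "z0 \<preceq> c" using le_sub0[of "r \<cdot> p" y] r P y c_def by simp
  have "c \<preceq> y" using c_def P y r by (simp add: sub_pos_le sm_pos)
  then have cN: "c \<preceq> real N \<cdot> p" using yNp le_trans P y cC by (meson closed(6))
  have "real n \<cdot> c \<preceq> p" for n::nat
  proof -
    have "real n \<cdot> c \<preceq> real n \<cdot> (real N \<cdot> p)" using cN P cC by (intro sm_mono) simp_all
    then have "real n \<cdot> c \<preceq> (real n * real N) \<cdot> p" using sm_mul[of p "real n" "real N"] P by simp
    then consider "real n \<cdot> c \<preceq> p" | "p \<preceq> real n \<cdot> c"
      using atom_le_or_ge[OF at] cC c0 by (meson closed(6) sm_pos of_nat_0_le_iff)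
    then show ?thesis
    proof cases
      case 2
      have n0: "n \<noteq> 0"
      proof
        assume "n = 0" then have "p \<preceq> z0" using 2 P cC by simp
        then show False using P by (metis le_antisym closed(1))
      qed
      have "(1/real n) \<cdot> p \<preceq> (1/real n) \<cdot> (real n \<cdot> c)" using 2 P cC by (intro sm_mono) simp_all
      also have "(1/real n) \<cdot> (real n \<cdot> c) = c" using sm_inv[of c "real n"] n0 cC by simp
      finally have pc: "(1/real n) \<cdot> p \<preceq> c" .
      have "(r + 1/real n) \<cdot> p = r \<cdot> p \<oplus> (1/real n) \<cdot> p" using P by (simp add: sm_radd)
      also have "\<dots> \<preceq> r \<cdot> p \<oplus> c" using pc P cC add_le_iffl by simp
      also have "r \<cdot> p \<oplus> c = y" using c_def P y add_comm[of "r \<cdot> p" "y \<ominus> r \<cdot> p"] by simp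
      finally have "r + 1/real n \<le> r" by (rule r_max)
      then show ?thesis using n0 by simp
    qed
  qed
  then have "c \<preceq> z0" using archimedean_le_zero[of c p] cC P by simp
  then have "c = z0" using c0 cC by (intro le_antisym) simp_all
  then have "y = r \<cdot> p" using c_def sub_eq0[of y "r \<cdot> p"] P y by simp
  then show ?thesis using r(1) by blast
qed

text \<open>For an atom \<open>p\<close>, \<open>p \<otimes> a\<close> is a real multiple of \<open>p\<close> (\<open>atom_mul_eq_chi\<close>), and \<open>chi p a\<close> is that
  multiple.\<close>

definition chi where "chi p a = (THE t. p \<otimes> a = t \<cdot> p)"

lemma chi_unique: assumes "atom p" "a \<in> C" "p \<otimes> a = t \<cdot> p" shows "chi p a = t"
  unfolding chi_def using assms atom_sm_inj[OF assms(1)] by (intro the_equality) auto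

lemma atom_mul_eq_chi: assumes at: "atom p" and a: "a \<in> C" shows "p \<otimes> a = chi p a \<cdot> p"
proof -
  note P = atomD[OF at]
  have "p \<otimes> (p \<otimes> x) = p \<otimes> x" if "x \<in> C" for x using P that by (simp add: mul_assoc[symmetric])
  then obtain t1 t2 where t1: "p \<otimes> pospart a = t1 \<cdot> p" and t2: "p \<otimes> negpart a = t2 \<cdot> p"
    using atom_below_multiple[OF at, of "p \<otimes> pospart a"] atom_below_multiple[OF at, of "p \<otimes> negpart a"] P a
    by (metis closed(3) closed(4) closed(5) mul_pos negpart_ge0 pospart_ge0 sup_cl closed(1))
  have "p \<otimes> a = p \<otimes> (pospart a \<ominus> negpart a)" using pospart_minus_negpart[OF a] by simp
  also have "\<dots> = t1 \<cdot> p \<ominus> t2 \<cdot> p" using P a t1 t2 by (simp add: distr mul_neg)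
  also have "\<dots> = (t1 - t2) \<cdot> p" using P by (simp add: sm_sub)
  finally show ?thesis using chi_unique[OF at a] by simp
qed

lemma chi_add: "atom p \<Longrightarrow> a \<in> C \<Longrightarrow> b \<in> C \<Longrightarrow> chi p (a \<oplus> b) = chi p a + chi p b"
proof (rule chi_unique)
  assume h: "atom p" "a \<in> C" "b \<in> C"
  note P = atomD[OF h(1)]
  have "p \<otimes> (a \<oplus> b) = p \<otimes> a \<oplus> p \<otimes> b" using h P by (simp add: distr)
  also have "\<dots> = (chi p a + chi p b) \<cdot> p" using h P atom_mul_eq_chi[OF h(1) h(2)] atom_mul_eq_chi[OF h(1) h(3)] by (simp add: sm_radd)
  finally show "p \<otimes> (a \<oplus> b) = (chi p a + chi p b) \<cdot> p" .
qed simp_all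
lemma chi_mul: "atom p \<Longrightarrow> a \<in> C \<Longrightarrow> b \<in> C \<Longrightarrow> chi p (a \<otimes> b) = chi p a * chi p b"
proof (rule chi_unique)
  assume h: "atom p" "a \<in> C" "b \<in> C"
  note P = atomD[OF h(1)]
  have "p \<otimes> (a \<otimes> b) = (p \<otimes> a) \<otimes> b" using h P by (simp add: mul_assoc)
  also have "\<dots> = (chi p a \<cdot> p) \<otimes> b" using atom_mul_eq_chi[OF h(1) h(2)] by simp
  also have "\<dots> = chi p a \<cdot> (p \<otimes> b)" using h P by (simp add: sm_ml)
  also have "\<dots> = chi p a \<cdot> (chi p b \<cdot> p)" using atom_mul_eq_chi[OF h(1) h(3)] by simp
  also have "\<dots> = (chi p a * chi p b) \<cdot> p" using h P by (simp add: sm_mul)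
  finally show "p \<otimes> (a \<otimes> b) = (chi p a * chi p b) \<cdot> p" .
qed simp_all
lemma chi_sm: "atom p \<Longrightarrow> a \<in> C \<Longrightarrow> chi p (r \<cdot> a) = r * chi p a"
proof (rule chi_unique)
  assume h: "atom p" "a \<in> C"
  note P = atomD[OF h(1)]
  have "p \<otimes> (r \<cdot> a) = r \<cdot> (p \<otimes> a)" using h P by (simp add: sm_ml2)
  also have "\<dots> = (r * chi p a) \<cdot> p" using h P atom_mul_eq_chi[OF h(1) h(2)] by (simp add: sm_mul)
  finally show "p \<otimes> (r \<cdot> a) = (r * chi p a) \<cdot> p" .
qed simp_all
lemma chi_u1: "atom p \<Longrightarrow> chi p u1 = 1"
  by (rule chi_unique) (simp_all add: atomD)
lemma chi_z0: "atom p \<Longrightarrow> chi p z0 = 0"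
  by (rule chi_unique) (simp_all add: atomD)
lemma chi_neg: "atom p \<Longrightarrow> a \<in> C \<Longrightarrow> chi p (neg a) = - chi p a"
  using chi_add[of p a "neg a"] chi_z0[of p] by simp
lemma chi_mono: assumes "atom p" "a \<in> C" "b \<in> C" "a \<preceq> b" shows "chi p a \<le> chi p b"
proof -
  note P = atomD[OF assms(1)]
  have "p \<otimes> a \<preceq> p \<otimes> b" using assms P by (intro mul_mono) simp_all
  then show ?thesis using atom_mul_eq_chi assms atom_sm_le_iff by simp
qed

lemma sup_sm_sm: "p \<in> C \<Longrightarrow> z0 \<preceq> p \<Longrightarrow> s \<cdot> p \<squnion> t \<cdot> p = max s t \<cdot> p"
  by (cases "s \<le> t") (simp_all add: sup_absorb sup_absorb2 sm_mono_r max_def)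
lemma inf_sm_sm: "p \<in> C \<Longrightarrow> z0 \<preceq> p \<Longrightarrow> s \<cdot> p \<sqinter> t \<cdot> p = min s t \<cdot> p"
  by (cases "s \<le> t") (simp_all add: inf_absorb inf_absorb2 sm_mono_r min_def)

lemma chi_sup: "atom p \<Longrightarrow> a \<in> C \<Longrightarrow> b \<in> C \<Longrightarrow> chi p (a \<squnion> b) = max (chi p a) (chi p b)"
proof (rule chi_unique)
  assume h: "atom p" "a \<in> C" "b \<in> C"
  note P = atomD[OF h(1)]
  have "p \<otimes> (a \<squnion> b) = p \<otimes> a \<squnion> p \<otimes> b" using h P by (simp add: mul_sup)
  also have "\<dots> = max (chi p a) (chi p b) \<cdot> p" using h P atom_mul_eq_chi[OF h(1) h(2)] atom_mul_eq_chi[OF h(1) h(3)] by (simp add: sup_sm_sm)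
  finally show "p \<otimes> (a \<squnion> b) = max (chi p a) (chi p b) \<cdot> p" .
qed simp_all
lemma chi_inf: "atom p \<Longrightarrow> a \<in> C \<Longrightarrow> b \<in> C \<Longrightarrow> chi p (a \<sqinter> b) = min (chi p a) (chi p b)"
proof (rule chi_unique)
  assume h: "atom p" "a \<in> C" "b \<in> C"
  note P = atomD[OF h(1)]
  have "p \<otimes> (a \<sqinter> b) = p \<otimes> a \<sqinter> p \<otimes> b" using h P by (simp add: mul_inf)
  also have "\<dots> = min (chi p a) (chi p b) \<cdot> p" using h P atom_mul_eq_chi[OF h(1) h(2)] atom_mul_eq_chi[OF h(1) h(3)] by (simp add: inf_sm_sm)
  finally show "p \<otimes> (a \<sqinter> b) = min (chi p a) (chi p b) \<cdot> p" .
qed simp_all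

lemma chi_atom: assumes "atom p" "atom q" shows "chi p q = (if p = q then 1 else 0)"
proof -
  note P = atomD[OF assms(1)] and Q = atomD[OF assms(2)]
  have pq: "p \<otimes> q = z0 \<or> p \<otimes> q = p" using P(6)[of "p \<otimes> q"] idem_mul_idem[OF P(1) Q(1) P(2) Q(2)] idem_mul_right[OF P(1) Q(1) P(2)] P Q by simp
  have qp: "q \<otimes> p = z0 \<or> q \<otimes> p = q" using Q(6)[of "q \<otimes> p"] idem_mul_idem[OF Q(1) P(1) Q(2) P(2)] idem_mul_right[OF Q(1) P(1) Q(2)] P Q by simp
  have c: "q \<otimes> p = p \<otimes> q" using P Q mul_comm by simp
  show ?thesis
  proof (cases "p \<otimes> q = z0")
    case True
    then have "p \<noteq> q" using P by auto
    then show ?thesis using chi_unique[OF assms(1) Q(1), of 0] True P by simp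
  next
    case False
    then have "p \<otimes> q = p" using pq by simp
    moreover have "q \<otimes> p = q" using qp c False by simp
    ultimately have "p = q" using c by simp
    then show ?thesis using chi_unique[OF assms(1) Q(1), of 1] P by simp
  qed
qed

lemma le_if_chi_le: assumes a: "a \<in> C" "b \<in> C" and h: "\<And>p. atom p \<Longrightarrow> chi p a \<le> chi p b" shows "a \<preceq> b"
proof (rule ccontr)
  assume nle: "\<not> a \<preceq> b"
  define c where "c = pospart (a \<ominus> b)"
  have cC: "c \<in> C" and c0: "z0 \<preceq> c" using c_def a by (simp_all add: pospart_ge0)
  have cne: "c \<noteq> z0"
  proof
    assume "c = z0"
    then have "a \<ominus> b \<preceq> z0" using c_def le_pospart[of "a \<ominus> b"] a by simp
    then show False using nle a sub_le_iff[of z0 b a] by simp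
  qed
  define f where "f = supp c"
  note sp = supp_props[OF cC c0, folded f_def]
  have fi: "f \<otimes> f = f" using supp_idem[OF cC c0] f_def by simp
  have fne: "f \<noteq> z0" using supp_ne[OF cC c0 cne] f_def by simp
  obtain p where at: "atom p" and pf: "p \<otimes> f = p"
    using atomic fi fne sp unfolding idems_atomic_def idems_def by blast
  note P = atomD[OF at]
  have "0 < chi p c"
  proof (rule ccontr)
    assume "\<not> 0 < chi p c"
    then have "chi p c \<cdot> p \<preceq> 0 \<cdot> p" using P sm_mono_r[of p "chi p c" 0] by simp
    then have pc1: "p \<otimes> c \<preceq> z0" using atom_mul_eq_chi[OF at cC] P by simp
    have pc2: "z0 \<preceq> p \<otimes> c" using P cC c0 by (simp add: mul_pos)
    have pc: "p \<otimes> c = z0" using pc1 pc2 P cC by (intro le_antisym) simp_all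
    define m where "m = p \<sqinter> c"
    have mC: "m \<in> C" and m0: "z0 \<preceq> m" and mp: "m \<preceq> p" and mc: "m \<preceq> c"
      using m_def P cC c0 by (simp_all add: inf_ge0 inf_le1 inf_le2)
    have pm: "p \<otimes> m = m" using idem_mul_absorb[OF P(1,2) mC m0, of 1] mp P by simp
    have "p \<otimes> m \<preceq> p \<otimes> c" using mc P mC cC by (intro mul_mono) simp_all
    then have "m \<preceq> z0" using pm pc by simp
    then have "m = z0" using m0 mC by (intro le_antisym) simp_all
    then have "p \<sqinter> f = z0" using supp_disj[OF cC c0 P(1) P(4)] m_def f_def by simp
    then have "p \<otimes> f = z0" using disj_mul0[OF P(1) sp(1) P(4) sp(2)] by simp
    then show False using pf P by simp
  qed
  moreover have "chi p c = max (chi p a - chi p b) 0"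
    using c_def a at by (simp add: chi_sup chi_add chi_neg chi_z0)
  ultimately have "chi p b < chi p a" by simp
  then show False using h[OF at] by simp
qed

lemma eq_if_chi_eq: "a \<in> C \<Longrightarrow> b \<in> C \<Longrightarrow> (\<And>p. atom p \<Longrightarrow> chi p a = chi p b) \<Longrightarrow> a = b"
proof -
  assume h: "a \<in> C" "b \<in> C" "\<And>p. atom p \<Longrightarrow> chi p a = chi p b"
  have "a \<preceq> b" using h by (intro le_if_chi_le) simp_all
  moreover have "b \<preceq> a" using h by (intro le_if_chi_le) simp_all
  ultimately show "a = b" using h le_antisym by simp
qed

lemma chi_bounded: assumes a: "a \<in> C" shows "\<exists>M. \<forall>p. atom p \<longrightarrow> \<bar>chi p a\<bar> \<le> M"
proof -
  obtain n::nat where n: "a \<preceq> real n \<cdot> u1" using bounded_by_nat a by blast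
  obtain m::nat where m: "neg a \<preceq> real m \<cdot> u1" using bounded_by_nat[of "neg a"] a by auto
  have "\<bar>chi p a\<bar> \<le> real n + real m" if at: "atom p" for p
  proof -
    have "chi p a \<le> real n" using chi_mono[OF at a _ n] chi_sm[OF at] chi_u1[OF at] by simp
    moreover have "- chi p a \<le> real m" using chi_mono[OF at _ _ m] chi_sm[OF at] chi_u1[OF at] chi_neg[OF at a] a by simp
    ultimately show ?thesis by simp
  qed
  then show ?thesis by blast
qed

lemma lub_nonempty: assumes "atom q" "is_lub A U u" shows "U \<noteq> {}"
proof
  assume U: "U = {}"
  note Q = atomD[OF assms(1)]
  have uC: "u \<in> C" using assms(2) unfolding is_lub_def is_ub_def by blast
  have "is_ub A U (u \<ominus> q)" using U uC Q unfolding is_ub_def by simp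
  then have "u \<preceq> u \<ominus> q" using assms(2) unfolding is_lub_def by blast
  then have "q \<preceq> z0" using uC Q le_sub_iff[of u q u] add_le_iffl[of q z0 u] add_comm[of u q] by simp
  then show False using Q by (metis le_antisym closed(1))
qed

lemma chi_lub: assumes at: "atom q" and U: "U \<subseteq> C" and l: "is_lub A U u"
  shows "chi q u = Sup (chi q ` U)"
proof -
  note Q = atomD[OF at]
  have ne: "U \<noteq> {}" using lub_nonempty[OF at l] .
  have uC: "u \<in> C" and ub: "\<And>s. s \<in> U \<Longrightarrow> s \<preceq> u"
    using l unfolding is_lub_def is_ub_def by blast+
  have l_le: "\<And>s. s \<in> U \<Longrightarrow> chi q s \<le> chi q u" using chi_mono[OF at] ub U uC by blast
  have bdd: "bdd_above (chi q ` U)" using l_le by (intro bdd_aboveI) blast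
  have S1: "Sup (chi q ` U) \<le> chi q u" using l_le ne by (intro cSup_least) auto
  show ?thesis
  proof (rule ccontr)
    assume "chi q u \<noteq> Sup (chi q ` U)"
    then have lt: "Sup (chi q ` U) < chi q u" using S1 by simp
    define d where "d = chi q u - Sup (chi q ` U)"
    have d0: "0 < d" using lt d_def by simp
    define v where "v = u \<ominus> d \<cdot> q"
    have vC: "v \<in> C" using v_def uC Q by simp
    have chv: "chi p v = chi p u - d * chi p q" if "atom p" for p
      using v_def chi_add[OF that] chi_neg[OF that] chi_sm[OF that] uC Q by simp
    have "is_ub A U v"
    proof -
      have "s \<preceq> v" if s: "s \<in> U" for s
      proof (rule le_if_chi_le)
        show "s \<in> C" using s U by blast
        show "v \<in> C" using vC .
        fix p assume ap: "atom p"
        show "chi p s \<le> chi p v"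
        proof (cases "p = q")
          case True
          have "chi q s \<le> Sup (chi q ` U)" using s bdd by (intro cSup_upper) auto
          then show ?thesis using True chv[OF ap] chi_atom[OF ap at] d_def by simp
        next
          case False
          have "chi p s \<le> chi p u" using chi_mono[OF ap] ub[OF s] s U uC by blast
          then show ?thesis using False chv[OF ap] chi_atom[OF ap at] by simp
        qed
      qed
      then show ?thesis unfolding is_ub_def using vC by blast
    qed
    then have "u \<preceq> v" using l unfolding is_lub_def by blast
    then have "chi q u \<le> chi q v" using chi_mono[OF at uC vC] by simp
    then show False using chv[OF at] chi_atom[OF at at] d0 by simp
  qed
qed

lemma exists_chi_eq: assumes M: "\<And>p. atom p \<Longrightarrow> \<bar>r p\<bar> \<le> M" shows "\<exists>a\<in>C. \<forall>p. atom p \<longrightarrow> chi p a = r p"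
proof -
  define M' where "M' = max M 0"
  have M': "\<And>p. atom p \<Longrightarrow> \<bar>r p\<bar> \<le> M'" "0 \<le> M'" using M M'_def by force+
  define U where "U = insert z0 ((\<lambda>p. (r p + M') \<cdot> p) ` {p. atom p})"
  have U: "U \<subseteq> C" using U_def atomD by auto
  have ub: "x \<preceq> (2 * M') \<cdot> u1" if xU: "x \<in> U" for x
  proof -
    consider "x = z0" | p where "atom p" "x = (r p + M') \<cdot> p" using xU U_def by blast
    then show ?thesis
    proof cases
      case 1 then show ?thesis using sm_pos[of u1 "2*M'"] one_pos M' by simp
    next
      case 2
      note P = atomD[OF 2(1)]
      have "(r p + M') \<cdot> p \<preceq> (2 * M') \<cdot> p" using M'(1)[OF 2(1)] P by (intro sm_mono_r) auto
      moreover have "(2 * M') \<cdot> p \<preceq> (2 * M') \<cdot> u1" using P M' by (intro sm_mono) simp_all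
      ultimately show ?thesis using 2 P le_trans by (meson closed(2) closed(6))
    qed
  qed
  obtain s where s: "is_lub A U s" using bounded_above_has_lub[OF U _ _ ub] U_def by auto
  have sC: "s \<in> C" using s unfolding is_lub_def is_ub_def by blast
  have chs: "chi q s = r q + M'" if at: "atom q" for q
  proof -
    have "chi q s = Sup (chi q ` U)" using chi_lub[OF at U s] .
    also have "Sup (chi q ` U) = r q + M'"
    proof (rule cSup_eq_maximum)
      have "chi q ((r q + M') \<cdot> q) = r q + M'" using chi_sm[OF at] chi_atom[OF at at] atomD[OF at] by simp
      then show "r q + M' \<in> chi q ` U" using U_def at by force
      fix x assume "x \<in> chi q ` U"
      then obtain y where y: "y \<in> U" "x = chi q y" by blast
      consider "y = z0" | p where "atom p" "y = (r p + M') \<cdot> p" using y U_def by blast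
      then show "x \<le> r q + M'"
      proof cases
        case 1 then show ?thesis using y chi_z0[OF at] M'(1)[OF at] by simp
      next
        case 2
        then have "x = (r p + M') * (if q = p then 1 else 0)"
          using y chi_sm[OF at] chi_atom[OF at 2(1)] atomD[OF 2(1)] by simp
        then show ?thesis using M'(1)[OF at] by auto
      qed
    qed
    finally show ?thesis .
  qed
  define a where "a = s \<ominus> M' \<cdot> u1"
  have "a \<in> C" using a_def sC by simp
  moreover have "chi p a = r p" if at: "atom p" for p
    using a_def chs[OF at] chi_add[OF at] chi_neg[OF at] chi_sm[OF at] chi_u1[OF at] sC by simp
  ultimately show ?thesis by blast
qed

lemma is_lub_if_chi_Sup:
  assumes U: "U \<subseteq> C" and u: "u \<in> C"
    and chi_u: "\<And>p. atom p \<Longrightarrow> U \<noteq> {} \<and> bdd_above (chi p ` U) \<and> chi p u = Sup (chi p ` U)"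
  shows "is_lub A U u"
  unfolding is_lub_def is_ub_def
proof (intro conjI ballI allI impI)
  show "u \<in> C" by (rule u)
  fix s assume "s \<in> U"
  then show "s \<preceq> u" using U u chi_u by (intro le_if_chi_le) (auto intro: cSup_upper)
next
  fix v assume v: "v \<in> C \<and> (\<forall>s\<in>U. s \<preceq> v)"
  show "u \<preceq> v"
  proof (rule le_if_chi_le)
    fix p assume p: "atom p"
    have "Sup (chi p ` U) \<le> chi p v" using chi_u[OF p] U v by (intro cSup_least) (auto intro: chi_mono[OF p])
    then show "chi p u \<le> chi p v" using chi_u[OF p] by simp
  qed (use u v in auto)
qed

end

lemma bal_alg_of_bal: "bal A \<Longrightarrow> bal_alg A"
  unfolding bal_def bal_alg_def bal_alg_axioms_def l_alg_def by blast
lemma basic_alg_of_basic: "basic A \<Longrightarrow> basic_alg A"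
  unfolding basic_def bal_def basic_alg_def basic_alg_axioms_def bal_alg_def bal_alg_axioms_def l_alg_def by blast

section \<open>Morphisms\<close>

lemma hom_zero: assumes "l_algebra A" "l_algebra B" "bal_hom A B g" shows "g (zr A) = zr B"
proof -
  interpret a: l_alg A by (rule l_alg.intro) (rule assms(1))
  interpret b: l_alg B by (rule l_alg.intro) (rule assms(2))
  have g: "\<And>x y. x \<in> car A \<Longrightarrow> y \<in> car A \<Longrightarrow> g (ad A x y) = ad B (g x) (g y)" "\<And>x. x \<in> car A \<Longrightarrow> g x \<in> car B"
    using assms(3) unfolding bal_hom_def by blast+
  have "ad B (g (zr A)) (g (zr A)) = ad B (g (zr A)) (zr B)"
    using g(1)[of "zr A" "zr A"] g(2)[of "zr A"] by simp
  then show ?thesis using b.add_lcancel g(2)[of "zr A"] by simp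
qed

lemma hom_neg: assumes "l_algebra A" "l_algebra B" "bal_hom A B g" "a \<in> car A" shows "g (ng A a) = ng B (g a)"
proof -
  interpret a: l_alg A by (rule l_alg.intro) (rule assms(1))
  interpret b: l_alg B by (rule l_alg.intro) (rule assms(2))
  have g: "\<And>x y. x \<in> car A \<Longrightarrow> y \<in> car A \<Longrightarrow> g (ad A x y) = ad B (g x) (g y)" "\<And>x. x \<in> car A \<Longrightarrow> g x \<in> car B"
    using assms(3) unfolding bal_hom_def by blast+
  have "ad B (g a) (g (ng A a)) = zr B" using g(1)[of a "ng A a"] assms hom_zero[OF assms(1-3)] by simp
  then show ?thesis using b.neg_unique[of "g a" "g (ng A a)"] g(2) assms(4) by simp
qed

lemma hom_mono: assumes "l_algebra A" "l_algebra B" "bal_hom A B g" "a \<in> car A" "b \<in> car A" "lq A a b"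
  shows "lq B (g a) (g b)"
proof -
  interpret a: l_alg A by (rule l_alg.intro) (rule assms(1))
  interpret b: l_alg B by (rule l_alg.intro) (rule assms(2))
  have "lsup A a b = b" using a.le_iff_sup assms by blast
  then have "lsup B (g a) (g b) = g b" using assms(3-5) unfolding bal_hom_def by metis
  moreover have "g a \<in> car B" "g b \<in> car B" using assms(3-5) unfolding bal_hom_def by blast+
  ultimately show ?thesis using b.le_iff_sup[of "g a" "g b"] by simp
qed

lemma hom_reflects_le: assumes "l_algebra A" "l_algebra B" "bal_hom A B g" "inj_on g (car A)" "a \<in> car A" "b \<in> car A"
    "lq B (g a) (g b)" shows "lq A a b"
proof -
  interpret a: l_alg A by (rule l_alg.intro) (rule assms(1))
  interpret b: l_alg B by (rule l_alg.intro) (rule assms(2))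
  have "g a \<in> car B" "g b \<in> car B" using assms(3,5,6) unfolding bal_hom_def by blast+
  then have "lsup B (g a) (g b) = g b" using b.le_iff_sup[of "g a" "g b"] assms(7) by simp
  then have "g (lsup A a b) = g b" using assms(3,5,6) unfolding bal_hom_def by metis
  then have "lsup A a b = b" using assms(4-6) a.sup_cl unfolding inj_on_def by blast
  then show ?thesis using a.le_iff_sup assms by blast
qed

lemma bal_hom_comp: assumes "bal_hom A B g" "bal_hom B D k" shows "bal_hom A D (k \<circ> g)"
  using assms unfolding bal_hom_def by auto

lemma bal_hom_lnorm_le:
  assumes "bal F" "bal S" and e: "bal_hom F S e" and a: "a \<in> car F"
  shows "lnorm S (e a) \<le> lnorm F a"
proof -
  interpret f: bal_alg F using assms(1) by (rule bal_alg_of_bal)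
  interpret s: bal_alg S using assms(2) by (rule bal_alg_of_bal)
  define bounds_F where "bounds_F = {r. 0 \<le> r \<and> lq F (lsup F a (ng F a)) (sm F r (un F))}"
  define bounds_S where "bounds_S = {r. 0 \<le> r \<and> lq S (lsup S (e a) (ng S (e a))) (sm S r (un S))}"
  have sub: "bounds_F \<subseteq> bounds_S"
  proof
    fix r assume "r \<in> bounds_F"
    then have r: "0 \<le> r" "lq F (lsup F a (ng F a)) (sm F r (un F))" using bounds_F_def by auto
    have "lq S (e (lsup F a (ng F a))) (e (sm F r (un F)))" using hom_mono[OF f.l_algebra s.l_algebra e] r a by simp
    then show "r \<in> bounds_S"
      using bounds_S_def r a e hom_neg[OF f.l_algebra s.l_algebra e a] unfolding bal_hom_def by simp
  qed
  obtain n :: nat where "lq F (lsup F a (ng F a)) (sm F (real n) (un F))"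
    using f.bounded_by_nat[of "lsup F a (ng F a)"] a by auto
  then have "bounds_F \<noteq> {}" using bounds_F_def by force
  moreover have "bdd_below bounds_S" unfolding bounds_S_def by (rule bdd_belowI[of _ 0]) simp
  ultimately have "Inf bounds_S \<le> Inf bounds_F" using sub by (rule cInf_superset_mono)
  then show ?thesis unfolding lnorm_def bounds_F_def bounds_S_def .
qed

text \<open>By negation, a homomorphism preserving all existing joins also preserves all existing meets.\<close>

lemma balg_homI:
  assumes A: "l_algebra A" and B: "l_algebra B" and g: "bal_hom A B g"
    and lub: "\<And>U u. U \<subseteq> car A \<Longrightarrow> is_lub A U u \<Longrightarrow> is_lub B (g ` U) (g u)"
  shows "balg_hom A B g"
proof -
  interpret a: l_alg A using A by (rule l_alg.intro)
  interpret b: l_alg B using B by (rule l_alg.intro)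
  have gC: "\<And>x. x \<in> car A \<Longrightarrow> g x \<in> car B" using g unfolding bal_hom_def by blast
  have "is_glb B (g ` U) (g u)" if U: "U \<subseteq> car A" and l: "is_glb A U u" for U u
  proof -
    have uC: "u \<in> car A" using l unfolding is_glb_def is_lb_def by blast
    have "ng A ` U \<subseteq> car A" using U by auto
    then have "is_lub B (g ` ng A ` U) (g (ng A u))" using lub a.glb_neg[OF U l] by blast
    moreover have "g ` ng A ` U = ng B ` g ` U" using hom_neg[OF A B g] U by (force simp: image_iff)
    moreover have "g (ng A u) = ng B (g u)" using hom_neg[OF A B g uC] .
    moreover have gU: "g ` U \<subseteq> car B" using U gC by blast
    ultimately have "is_lub B (ng B ` g ` U) (ng B (g u))" by simp
    then have "is_glb B (ng B ` ng B ` g ` U) (ng B (ng B (g u)))" using gU by (intro b.lub_neg) auto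
    moreover have "ng B ` ng B ` g ` U = g ` U" using gU by (force simp: image_iff)
    ultimately show ?thesis using uC gC by simp
  qed
  then show ?thesis unfolding balg_hom_def using g lub by blast
qed

lemma balg_hom_if_chi_comp:
  assumes S: "basic S" and A: "basic A"
    and Y: "\<And>p. idem_atom A p \<Longrightarrow> idem_atom S (Y p)"
    and gC: "\<And>s. s \<in> car S \<Longrightarrow> g s \<in> car A"
    and chi_g: "\<And>s p. s \<in> car S \<Longrightarrow> idem_atom A p \<Longrightarrow>
      basic_alg.chi A p (g s) = basic_alg.chi S (Y p) s"
  shows "balg_hom S A g"
proof -
  interpret s: basic_alg S using S by (rule basic_alg_of_basic)
  interpret a: basic_alg A using A by (rule basic_alg_of_basic)
  have Y_atoms: "\<And>p. a.atom p \<Longrightarrow> s.atom (Y p)" by (rule Y)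
  have hom: "bal_hom S A g"
    unfolding bal_hom_def
  proof (intro conjI ballI allI)
    show "g u \<in> car A" if "u \<in> car S" for u using gC that .
    show "g (un S) = un A"
      by (rule a.eq_if_chi_eq) (simp_all add: gC chi_g Y_atoms a.chi_u1 s.chi_u1)
    fix u v assume u: "u \<in> car S" and v: "v \<in> car S"
    show "g (ad S u v) = ad A (g u) (g v)"
      by (rule a.eq_if_chi_eq) (simp_all add: u v gC chi_g Y_atoms a.chi_add s.chi_add)
    show "g (ml S u v) = ml A (g u) (g v)"
      by (rule a.eq_if_chi_eq) (simp_all add: u v gC chi_g Y_atoms a.chi_mul s.chi_mul)
    show "g (lsup S u v) = lsup A (g u) (g v)"
      by (rule a.eq_if_chi_eq) (simp_all add: u v gC chi_g Y_atoms a.chi_sup s.chi_sup)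
    show "g (linf S u v) = linf A (g u) (g v)"
      by (rule a.eq_if_chi_eq) (simp_all add: u v gC chi_g Y_atoms a.chi_inf s.chi_inf)
  next
    fix r u assume u: "u \<in> car S"
    show "g (sm S r u) = sm A r (g u)"
      by (rule a.eq_if_chi_eq) (simp_all add: u gC chi_g Y_atoms a.chi_sm s.chi_sm)
  qed
  have "is_lub A (g ` U) (g u)" if U: "U \<subseteq> car S" and l: "is_lub S U u" for U u
  proof (rule a.is_lub_if_chi_Sup)
    have uC: "u \<in> car S" and ub: "\<And>v. v \<in> U \<Longrightarrow> lq S v u"
      using l unfolding is_lub_def is_ub_def by blast+
    show "g u \<in> car A" using gC uC .
    show "g ` U \<subseteq> car A" using U gC by blast
    fix p assume p: "a.atom p"
    have image: "a.chi p ` g ` U = s.chi (Y p) ` U"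
      unfolding image_image using U chi_g[OF _ p] by (intro image_cong) auto
    have "bdd_above (s.chi (Y p) ` U)"
    proof (rule bdd_aboveI2)
      fix v assume "v \<in> U"
      then show "s.chi (Y p) v \<le> s.chi (Y p) u" using U ub uC by (intro s.chi_mono[OF Y[OF p]]) auto
    qed
    then show "g ` U \<noteq> {} \<and> bdd_above (a.chi p ` g ` U) \<and> a.chi p (g u) = Sup (a.chi p ` g ` U)"
      unfolding image using s.lub_nonempty[OF Y[OF p] l] s.chi_lub[OF Y[OF p] U l] chi_g[OF uC p] by simp
  qed
  then show ?thesis using balg_homI[OF s.l_algebra a.l_algebra hom] by blast
qed

lemma atom_map_balg_hom:
  assumes S: "basic S" and A: "basic A"
    and Y: "\<And>p. idem_atom A p \<Longrightarrow> idem_atom S (Y p)"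
  shows "\<exists>g. balg_hom S A g \<and>
    (\<forall>s\<in>car S. \<forall>p. idem_atom A p \<longrightarrow> basic_alg.chi A p (g s) = basic_alg.chi S (Y p) s)"
proof -
  interpret s: basic_alg S using S by (rule basic_alg_of_basic)
  interpret a: basic_alg A using A by (rule basic_alg_of_basic)
  define g where "g s = (SOME a. a \<in> car A \<and> (\<forall>p. a.atom p \<longrightarrow> a.chi p a = s.chi (Y p) s))" for s
  have g: "g s \<in> car A \<and> (\<forall>p. a.atom p \<longrightarrow> a.chi p (g s) = s.chi (Y p) s)" if s: "s \<in> car S" for s
  proof -
    obtain M where M: "\<forall>y. s.atom y \<longrightarrow> \<bar>s.chi y s\<bar> \<le> M" using s.chi_bounded[OF s] by blast
    have "\<exists>a\<in>car A. \<forall>p. a.atom p \<longrightarrow> a.chi p a = s.chi (Y p) s"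
      by (rule a.exists_chi_eq[of "\<lambda>p. s.chi (Y p) s" M]) (simp add: M Y)
    then have "\<exists>a. a \<in> car A \<and> (\<forall>p. a.atom p \<longrightarrow> a.chi p a = s.chi (Y p) s)" by blast
    then show ?thesis unfolding g_def by (rule someI_ex)
  qed
  have gC: "\<And>s. s \<in> car S \<Longrightarrow> g s \<in> car A" using g by blast
  have chi_g: "\<And>s p. s \<in> car S \<Longrightarrow> a.atom p \<Longrightarrow> a.chi p (g s) = s.chi (Y p) s" using g by blast
  have "balg_hom S A g" by (rule balg_hom_if_chi_comp[OF S A Y gC chi_g])
  then show ?thesis using chi_g by blast
qed

section \<open>Canonical extensions\<close>

definition real_character :: "'a lalg \<Rightarrow> ('a \<Rightarrow> real) \<Rightarrow> bool" where
  "real_character F \<phi> \<longleftrightarrow> \<phi> (un F) = 1 \<and>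
    (\<forall>a\<in>car F. \<forall>b\<in>car F. \<phi> (ad F a b) = \<phi> a + \<phi> b) \<and>
    (\<forall>r. \<forall>a\<in>car F. \<phi> (sm F r a) = r * \<phi> a) \<and>
    (\<forall>a\<in>car F. \<forall>b\<in>car F. \<phi> (lsup F a b) = max (\<phi> a) (\<phi> b)) \<and>
    (\<forall>a\<in>car F. \<forall>b\<in>car F. \<phi> (linf F a b) = min (\<phi> a) (\<phi> b))"

lemma real_character_simps:
  assumes "l_algebra F" "real_character F \<phi>"
  shows "\<phi> (un F) = 1"
    and "\<And>a b. a \<in> car F \<Longrightarrow> b \<in> car F \<Longrightarrow> \<phi> (ad F a b) = \<phi> a + \<phi> b"
    and "\<And>r a. a \<in> car F \<Longrightarrow> \<phi> (sm F r a) = r * \<phi> a"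
    and "\<And>a b. a \<in> car F \<Longrightarrow> b \<in> car F \<Longrightarrow> \<phi> (lsup F a b) = max (\<phi> a) (\<phi> b)"
    and "\<And>a b. a \<in> car F \<Longrightarrow> b \<in> car F \<Longrightarrow> \<phi> (linf F a b) = min (\<phi> a) (\<phi> b)"
    and zero: "\<phi> (zr F) = 0"
    and "\<And>a. a \<in> car F \<Longrightarrow> \<phi> (ng F a) = - \<phi> a"
proof -
  interpret f: l_alg F using assms(1) by (rule l_alg.intro)
  show "\<phi> (un F) = 1"
    and add: "\<And>a b. a \<in> car F \<Longrightarrow> b \<in> car F \<Longrightarrow> \<phi> (ad F a b) = \<phi> a + \<phi> b"
    and sm: "\<And>r a. a \<in> car F \<Longrightarrow> \<phi> (sm F r a) = r * \<phi> a"
    and "\<And>a b. a \<in> car F \<Longrightarrow> b \<in> car F \<Longrightarrow> \<phi> (lsup F a b) = max (\<phi> a) (\<phi> b)"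
    and "\<And>a b. a \<in> car F \<Longrightarrow> b \<in> car F \<Longrightarrow> \<phi> (linf F a b) = min (\<phi> a) (\<phi> b)"
    using assms(2) unfolding real_character_def by blast+
  show zero: "\<phi> (zr F) = 0" using sm[of "un F" 0] by simp
  fix a assume "a \<in> car F"
  then show "\<phi> (ng F a) = - \<phi> a" using add[of a "ng F a"] zero by simp
qed

lemma real_character_mono:
  assumes "l_algebra F" "real_character F \<phi>" "a \<in> car F" "b \<in> car F" "lq F a b"
  shows "\<phi> a \<le> \<phi> b"
proof -
  interpret f: l_alg F using assms(1) by (rule l_alg.intro)
  have "lsup F a b = b" using assms(3-5) f.le_iff_sup by blast
  then have "max (\<phi> a) (\<phi> b) = \<phi> b" using real_character_simps(4)[OF assms(1-4)] by simp
  then show ?thesis by (simp add: max_def split: if_splits)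
qed

lemma real_character_chi:
  assumes "basic S" "bal_hom F S e" "idem_atom S y"
  shows "real_character F (\<lambda>a. basic_alg.chi S y (e a))"
proof -
  interpret s: basic_alg S using assms(1) by (rule basic_alg_of_basic)
  show ?thesis unfolding real_character_def
    using assms(2)[unfolded bal_hom_def] s.chi_u1[OF assms(3)] s.chi_add[OF assms(3)]
      s.chi_sm[OF assms(3)] s.chi_sup[OF assms(3)] s.chi_inf[OF assms(3)] by simp
qed

text \<open>The elements \<open>(1 - n\<bar>a - \<psi>(a)\<bar>) \<squnion> 0\<close> all have \<open>\<psi>\<close>-value \<open>1\<close>, so their images lie above \<open>m\<close>; at the atom
  \<open>y\<close> this bounds \<open>1 - n\<bar>chi y (e a) - \<psi>(a)\<bar>\<close> from below by \<open>chi y m > 0\<close> for every \<open>n\<close>.\<close>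

lemma chi_eq_real_character_if_pos:
  assumes F: "l_algebra F" and S: "basic S" and e: "bal_hom F S e" and \<psi>: "real_character F \<psi>"
    and y: "idem_atom S y" and m: "m \<in> car S" "0 < basic_alg.chi S y m"
    and below: "\<And>x. x \<in> car F \<Longrightarrow> lq F (zr F) x \<Longrightarrow> \<psi> x = 1 \<Longrightarrow> lq S m (e x)"
    and a: "a \<in> car F"
  shows "basic_alg.chi S y (e a) = \<psi> a"
proof -
  interpret f: l_alg F using F by (rule l_alg.intro)
  interpret s: basic_alg S using S by (rule basic_alg_of_basic)
  define \<phi> where "\<phi> b = s.chi y (e b)" for b
  have \<phi>: "real_character F \<phi>" using real_character_chi[OF S e y] unfolding \<phi>_def .
  note simps = real_character_simps[OF F \<psi>] real_character_simps[OF F \<phi>]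
  define d where "d = ad F a (ng F (sm F (\<psi> a) (un F)))"
  define abs_d where "abs_d = lsup F d (ng F d)"
  define x where "x n = lsup F (ad F (un F) (ng F (sm F (real n) abs_d))) (zr F)" for n :: nat
  have C: "d \<in> car F" "abs_d \<in> car F" "x n \<in> car F" for n
    using a by (simp_all add: d_def abs_d_def x_def)
  have "\<psi> abs_d = 0" using C a by (simp add: abs_d_def d_def simps)
  then have "lq S m (e (x n))" for n using C by (intro below) (simp_all add: x_def simps f.sup_ge2)
  then have "s.chi y m \<le> \<phi> (x n)" for n
    using s.chi_mono[OF y m(1)] e C unfolding \<phi>_def bal_hom_def by blast
  moreover have "\<phi> abs_d = \<bar>\<phi> a - \<psi> a\<bar>" using C a by (simp add: abs_d_def d_def simps)
  then have "\<phi> (x n) = max (1 - real n * \<bar>\<phi> a - \<psi> a\<bar>) 0" for n using C by (simp add: x_def simps)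
  ultimately have small: "real n * \<bar>\<phi> a - \<psi> a\<bar> < 1" for n :: nat
    using m(2) by (smt (verit))
  have "\<bar>\<phi> a - \<psi> a\<bar> = 0"
  proof (rule ccontr)
    assume "\<bar>\<phi> a - \<psi> a\<bar> \<noteq> 0"
    then have "0 < \<bar>\<phi> a - \<psi> a\<bar>" by simp
    then obtain n :: nat where "1 < real n * \<bar>\<phi> a - \<psi> a\<bar>" using ex_less_of_nat_mult by blast
    then show False using small[of n] by simp
  qed
  then show ?thesis unfolding \<phi>_def by simp
qed

text \<open>Compactness of the canonical extension: were \<open>m \<le> 0\<close>, the meet \<open>m + 1/2\<close> would lie below \<open>e(1/2)\<close>,
  so some finite meet of elements of value \<open>1\<close> would lie below \<open>1/2\<close>.\<close>

lemma canonical_extension_chi_glb_pos: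
  assumes F: "bal F" and ce: "canonical_extension F S e" and \<psi>: "real_character F \<psi>"
    and m: "is_glb S (e ` {x \<in> car F. lq F (zr F) x \<and> \<psi> x = 1}) m"
  shows "\<exists>y. idem_atom S y \<and> 0 < basic_alg.chi S y m"
proof (rule ccontr)
  assume no_atom: "\<not> ?thesis"
  define P where "P = {x \<in> car F. lq F (zr F) x \<and> \<psi> x = 1}"
  have S: "basic S" and e: "bal_hom F S e" and inj: "inj_on e (car F)"
    and compact: "\<forall>P Q m j \<epsilon>. P \<subseteq> car F \<and> Q \<subseteq> car F \<and> (\<epsilon>::real) > 0 \<and>
        is_glb S (e ` P) m \<and> is_lub S (e ` Q) j \<and> lq S (ad S m (sm S \<epsilon> (un S))) j \<longrightarrow>
        (\<exists>P' Q' m' j'. finite P' \<and> finite Q' \<and> P' \<subseteq> P \<and> Q' \<subseteq> Q \<and> P' \<noteq> {} \<and> Q' \<noteq> {} \<and>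
           is_glb S (e ` P') m' \<and> is_lub S (e ` Q') j' \<and> lq S m' j')"
    using ce unfolding canonical_extension_def by blast+
  interpret f: bal_alg F using F by (rule bal_alg_of_bal)
  interpret s: basic_alg S using S by (rule basic_alg_of_basic)
  have eC: "\<And>a. a \<in> car F \<Longrightarrow> e a \<in> car S" using e unfolding bal_hom_def by blast
  have mC: "m \<in> car S" using m unfolding is_glb_def is_lb_def by blast
  have "lq S m (zr S)" using no_atom mC by (intro s.le_if_chi_le) (auto simp: s.chi_z0 not_less)
  define half where "half = sm F (1/2) (un F)"
  have halfC: "half \<in> car F" unfolding half_def by simp
  have e_half: "e half = sm S (1/2) (un S)" using e unfolding half_def bal_hom_def by simp
  have "lq S (ad S m (sm S (1/2) (un S))) (e half)"
    using s.add_mono[OF mC _ _ \<open>lq S m (zr S)\<close>, of "sm S (1/2) (un S)"] e_half by simp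
  then obtain P' Q' m' j' where fin: "finite P'" "P' \<subseteq> P" "P' \<noteq> {}" "Q' \<subseteq> {half}" "Q' \<noteq> {}"
      and m': "is_glb S (e ` P') m'" and j': "is_lub S (e ` Q') j'" "lq S m' j'"
    using compact[rule_format, of P "{half}" "1/2" m "e half"] halfC m
      s.is_lub_singleton[OF eC[OF halfC]] unfolding P_def by auto
  have "j' = e half" using fin(4,5) j'(1) s.is_lub_singleton[OF eC[OF halfC]] s.lub_unique
    by (metis image_empty image_insert subset_singletonD)
  obtain b where b: "b \<in> P" "\<forall>x\<in>P'. lq F b x"
    using f.meet_closed_lower_bound[OF fin(1,3,2)] unfolding P_def
    by (auto simp: f.inf_ge0 real_character_simps[OF f.l_algebra \<psi>])
  have bC: "b \<in> car F" using b unfolding P_def by blast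
  have "is_lb S (e ` P') (e b)"
    unfolding is_lb_def using b fin(2) eC[OF bC] hom_mono[OF f.l_algebra s.l_algebra e] unfolding P_def by blast
  then have "lq S (e b) m'" using m' unfolding is_glb_def by blast
  then have "lq S (e b) (e half)"
    using \<open>j' = e half\<close> j'(2) m' eC[OF bC] eC[OF halfC] s.le_trans unfolding is_glb_def is_lb_def by blast
  then have "\<psi> b \<le> \<psi> half"
    using hom_reflects_le[OF f.l_algebra s.l_algebra e inj bC halfC] real_character_mono[OF f.l_algebra \<psi> bC halfC]
    by blast
  moreover have "\<psi> half = 1/2" "\<psi> b = 1"
    using b unfolding half_def P_def by (simp_all add: real_character_simps[OF f.l_algebra \<psi>])
  ultimately show False by simp
qed

lemma canonical_extension_real_character_point:
  assumes F: "bal F" and ce: "canonical_extension F S e" and \<psi>: "real_character F \<psi>"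
  shows "\<exists>y. idem_atom S y \<and> (\<forall>a\<in>car F. basic_alg.chi S y (e a) = \<psi> a)"
proof -
  define P where "P = {x \<in> car F. lq F (zr F) x \<and> \<psi> x = 1}"
  have S: "basic S" and e: "bal_hom F S e" using ce unfolding canonical_extension_def by blast+
  interpret f: bal_alg F using F by (rule bal_alg_of_bal)
  interpret s: basic_alg S using S by (rule basic_alg_of_basic)
  have "e ` P \<subseteq> car S" using e unfolding P_def bal_hom_def by blast
  moreover have "e (un F) \<in> e ` P" using f.one_pos unfolding P_def by (simp add: real_character_simps[OF f.l_algebra \<psi>])
  moreover have "lq S (zr S) z" if "z \<in> e ` P" for z
    using that hom_mono[OF f.l_algebra s.l_algebra e, of "zr F"] hom_zero[OF f.l_algebra s.l_algebra e]
    unfolding P_def by auto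
  ultimately obtain m where m: "is_glb S (e ` P) m" using s.bounded_below_has_glb[of "e ` P" "zr S"] by auto
  then obtain y where y: "idem_atom S y" "0 < s.chi y m"
    using canonical_extension_chi_glb_pos[OF F ce \<psi>] unfolding P_def by blast
  have "m \<in> car S" and "\<And>x. x \<in> P \<Longrightarrow> lq S m (e x)" using m unfolding is_glb_def is_lb_def by blast+
  then have "s.chi y (e a) = \<psi> a" if "a \<in> car F" for a
    using chi_eq_real_character_if_pos[OF f.l_algebra S e \<psi> y(1) _ y(2) _ that] unfolding P_def by blast
  then show ?thesis using y by blast
qed

lemma canonical_extension_wmor:
  assumes "bal F" "canonical_extension F S e" "wmor X w F eta"
  shows "wmor X w S (e \<circ> eta)"
proof -
  have S: "bal S" and e: "bal_hom F S e"
    using assms(2) unfolding canonical_extension_def basic_def by blast+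
  show ?thesis
    unfolding wmor_def
  proof
    fix x assume x: "x \<in> X"
    then have eta: "eta x \<in> car F" "lnorm F (eta x) \<le> w x" using assms(3) unfolding wmor_def by blast+
    then have "lnorm S (e (eta x)) \<le> w x" using bal_hom_lnorm_le[OF assms(1) S e] by force
    then show "(e \<circ> eta) x \<in> car S \<and> lnorm S ((e \<circ> eta) x) \<le> w x"
      using e eta unfolding bal_hom_def by simp
  qed
qed

lemma canonical_extension_extends_bal_hom:
  assumes F: "bal F" and ce: "canonical_extension F S e" and A: "basic A" and h: "bal_hom F A h"
  shows "\<exists>g. balg_hom S A g \<and> (\<forall>a\<in>car F. g (e a) = h a)"
proof -
  have S: "basic S" and e: "bal_hom F S e" using ce unfolding canonical_extension_def by blast+
  interpret a: basic_alg A using A by (rule basic_alg_of_basic)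
  have "\<exists>y. idem_atom S y \<and> (\<forall>a\<in>car F. basic_alg.chi S y (e a) = a.chi p (h a))" if "a.atom p" for p
    using canonical_extension_real_character_point[OF F ce real_character_chi[OF A h that]] .
  then obtain Y where Y: "\<And>p. a.atom p \<Longrightarrow> idem_atom S (Y p)"
    and chi_Y: "\<And>p a. a.atom p \<Longrightarrow> a \<in> car F \<Longrightarrow> basic_alg.chi S (Y p) (e a) = a.chi p (h a)"
    by metis
  have "\<exists>g. balg_hom S A g \<and> (\<forall>s\<in>car S. \<forall>p. a.atom p \<longrightarrow> a.chi p (g s) = basic_alg.chi S (Y p) s)"
    using S A by (rule atom_map_balg_hom) (rule Y)
  then obtain g where g: "balg_hom S A g"
    and chi_g: "\<And>s p. s \<in> car S \<Longrightarrow> a.atom p \<Longrightarrow> a.chi p (g s) = basic_alg.chi S (Y p) s"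
    by blast
  have "g (e a) = h a" if "a \<in> car F" for a
    using that e h g chi_g chi_Y unfolding balg_hom_def bal_hom_def by (intro a.eq_if_chi_eq) auto
  then show ?thesis using g by blast
qed

lemma canonical_extension_balg_hom_unique:
  assumes ce: "canonical_extension F S e" and A: "l_algebra A"
    and g: "balg_hom S A g" and g': "balg_hom S A g'" and eq: "\<And>a. a \<in> car F \<Longrightarrow> g' (e a) = g (e a)"
    and s: "s \<in> car S"
  shows "g' s = g s"
proof -
  interpret a: l_alg A using A by (rule l_alg.intro)
  have e: "bal_hom F S e" using ce unfolding canonical_extension_def by blast
  obtain \<T> where \<T>: "\<forall>T\<in>\<T>. T \<subseteq> car F \<and> (\<exists>m. is_glb S (e ` T) m)"
    and s_lub: "is_lub S {m. \<exists>T\<in>\<T>. is_glb S (e ` T) m} s"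
    using ce s unfolding canonical_extension_def by blast
  define M where "M = {m. \<exists>T\<in>\<T>. is_glb S (e ` T) m}"
  have MC: "M \<subseteq> car S" unfolding M_def is_glb_def is_lb_def by blast
  have g_lub: "\<And>U u. U \<subseteq> car S \<Longrightarrow> is_lub S U u \<Longrightarrow> is_lub A (g ` U) (g u)"
    and g_glb: "\<And>U u. U \<subseteq> car S \<Longrightarrow> is_glb S U u \<Longrightarrow> is_glb A (g ` U) (g u)"
    using g unfolding balg_hom_def by blast+
  have g'_lub: "\<And>U u. U \<subseteq> car S \<Longrightarrow> is_lub S U u \<Longrightarrow> is_lub A (g' ` U) (g' u)"
    and g'_glb: "\<And>U u. U \<subseteq> car S \<Longrightarrow> is_glb S U u \<Longrightarrow> is_glb A (g' ` U) (g' u)"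
    using g' unfolding balg_hom_def by blast+
  have "g' m = g m" if "m \<in> M" for m
  proof -
    obtain T where T: "T \<subseteq> car F" "is_glb S (e ` T) m" using \<T> \<open>m \<in> M\<close> unfolding M_def by blast
    then have eT: "e ` T \<subseteq> car S" using e unfolding bal_hom_def by blast
    have "g' ` e ` T = g ` e ` T" using eq T(1) by (force simp: image_iff)
    then have "is_glb A (g' ` e ` T) (g m)" using g_glb[OF eT T(2)] by simp
    then show ?thesis using g'_glb[OF eT T(2)] a.glb_unique by blast
  qed
  then have "g' ` M = g ` M" by (force simp: image_iff)
  then have "is_lub A (g' ` M) (g s)" using g_lub[OF MC s_lub[folded M_def]] by simp
  then show ?thesis using g'_lub[OF MC s_lub[folded M_def]] a.lub_unique by blast
qed

theorem proposition4p4: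
  fixes X :: "'x set" and w :: "'x \<Rightarrow> real"
    and F :: "'f lalg" and eta :: "'x \<Rightarrow> 'f"
    and S :: "'s lalg" and e :: "'f \<Rightarrow> 's"
  assumes ws: "wset X w"
    and F_bal: "bal F"
    and eta_mor: "wmor X w F eta"
    and F_free: "\<forall>(A::'b lalg) f. bal A \<and> wmor X w A f \<longrightarrow>
        (\<exists>g. bal_hom F A g \<and> (\<forall>x\<in>X. g (eta x) = f x) \<and>
             (\<forall>g'. bal_hom F A g' \<and> (\<forall>x\<in>X. g' (eta x) = f x) \<longrightarrow> (\<forall>a\<in>car F. g' a = g a)))"
    and canext: "canonical_extension F S e"
  shows "basic S \<and> wmor X w S (e \<circ> eta) \<and>
    (\<forall>(A::'b lalg) f. basic A \<and> wmor X w A f \<longrightarrow>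
        (\<exists>g. balg_hom S A g \<and> (\<forall>x\<in>X. g (e (eta x)) = f x) \<and>
             (\<forall>g'. balg_hom S A g' \<and> (\<forall>x\<in>X. g' (e (eta x)) = f x) \<longrightarrow> (\<forall>a\<in>car S. g' a = g a))))"
proof -
  have S: "basic S" and e: "bal_hom F S e" using canext unfolding canonical_extension_def by blast+
  have eta: "\<And>x. x \<in> X \<Longrightarrow> eta x \<in> car F" using eta_mor unfolding wmor_def by blast
  have "\<exists>g. balg_hom S A g \<and> (\<forall>x\<in>X. g (e (eta x)) = f x) \<and>
      (\<forall>g'. balg_hom S A g' \<and> (\<forall>x\<in>X. g' (e (eta x)) = f x) \<longrightarrow> (\<forall>a\<in>car S. g' a = g a))"
    if A: "basic A" and f: "wmor X w A f" for A :: "'b lalg" and f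
  proof -
    have "bal A" using A unfolding basic_def by blast
    then obtain h where h: "bal_hom F A h" "\<forall>x\<in>X. h (eta x) = f x"
      and h_unique: "\<And>h'. bal_hom F A h' \<and> (\<forall>x\<in>X. h' (eta x) = f x) \<Longrightarrow> \<forall>a\<in>car F. h' a = h a"
      using F_free f by blast
    obtain g where g: "balg_hom S A g" and g_ext: "\<forall>a\<in>car F. g (e a) = h a"
      using canonical_extension_extends_bal_hom[OF F_bal canext A h(1)] by blast
    have "\<forall>s\<in>car S. g' s = g s" if g': "balg_hom S A g'" "\<forall>x\<in>X. g' (e (eta x)) = f x" for g'
    proof -
      have "bal_hom F A (g' \<circ> e)" using bal_hom_comp[OF e] g' unfolding balg_hom_def by blast
      then have "\<forall>a\<in>car F. (g' \<circ> e) a = h a" using h_unique[of "g' \<circ> e"] g'(2) by simp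
      then have "\<forall>a\<in>car F. g' (e a) = g (e a)" using g_ext by simp
      moreover have "l_algebra A" using \<open>bal A\<close> unfolding bal_def by blast
      ultimately show ?thesis using canonical_extension_balg_hom_unique[OF canext _ g g'(1)] by blast
    qed
    moreover have "\<forall>x\<in>X. g (e (eta x)) = f x" using g_ext h(2) eta by simp
    ultimately show ?thesis using g by blast
  qed
  then show ?thesis using S canonical_extension_wmor[OF F_bal canext eta_mor] by blast
qed

end
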